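(* Let $M$ be a connected matroid. The following are equivalent. (i) $M$ has the symmetric strong circuit elimination property (SSCE); (ii) $M$ has no pair of skew circuits; (iii) for all integers $k\ge 3$ and $l\ge 3$, $M$ has no series minor isomorphic to the series connection $S(U_{k-2,k},U_{l-2,l})$; (iv) $M^*$ is unbreakable.
   Context: A matroid $M$ has the symmetric strong circuit elimination property (SSCE) if, whenever $C_1$ and $C_2$ are circuits of $M$ and $e_1,e_2,e$ are elements with $e_1\in C_1-C_2$, $e_2\in C_2-C_1$ and $e\in C_1\cap C_2$, there is a circuit $C_3$ of $M$ with $\{e_1,e_2\}\subseteq C_3\subseteq (C_1\cup C_2)-e$. Two sets $X,Y$ in a matroid with rank function $r$ are skew if $r(X)+r(Y)=r(X\cup Y)$; a pair of skew circuits is a pair of distinct circuits that are skew. $U_{r,n}$ denotes the uniform matroid of rank $r$ on $n$ elements. Series connection: if $M_1,M_2$ are matroids with $E(M_1)\cap E(M_2)=\{p\}$ and $p$ is neither a loop nor a coloop of either, then $S((M_1;p),(M_2;p))$ (also written $S(M_1,M_2)$) is the matroid on $E(M_1)\cup E(M_2)$ whose circuits are the circuits of $M_1$ avoiding $p$, the circuits of $M_2$ avoiding $p$, and all sets $C_1\cup C_2$ where $C_i$ is a circuit of $M_i$ containing $p$ for $i=1,2$. (For uniform $M_1,M_2$ the choice of basepoint does not matter up to isomorphism.) A series contraction of $M$ is the contraction $M/f$ of an element $f$ for which there is $g$ with $\{f,g\}$ a cocircuit of $M$; a matroid $N$ is a series minor of $M$ if $N$ can be obtained from $M$ by a sequence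 of deletions and series contractions. A matroid $M$ is unbreakable if $M$ is connected and $M/F$ is connected for every flat $F$ of $M$. *)

theory Defs
  imports Main
begin

datatype 'a matroid = Matroid (gnd: "'a set") (indeps: "'a set set")

definition wf_matroid :: "'a matroid \<Rightarrow> bool" where
  "wf_matroid M \<longleftrightarrow>
     finite (gnd M) \<and> indeps M \<subseteq> Pow (gnd M) \<and> {} \<in> indeps M \<and>
     (\<forall>X Y. X \<in> indeps M \<and> Y \<subseteq> X \<longrightarrow> Y \<in> indeps M) \<and>
     (\<forall>X Y. X \<in> indeps M \<and> Y \<in> indeps M \<and> card X < card Y \<longrightarrow>
        (\<exists>e \<in> Y - X. insert e X \<in> indeps M))"

definition circuit :: "'a matroid \<Rightarrow> 'a set \<Rightarrow> bool" where
  "circuit M C \<longleftrightarrow> C \<subseteq> gnd M \<and> C \<notin> indeps M \<and> (\<forall>D. D \<subset> C \<longrightarrow> D \<in> indeps M)"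

definition rank :: "'a matroid \<Rightarrow> 'a set \<Rightarrow> nat" where
  "rank M X = Max (card ` {Y. Y \<subseteq> X \<and> Y \<in> indeps M})"

definition skew :: "'a matroid \<Rightarrow> 'a set \<Rightarrow> 'a set \<Rightarrow> bool" where
  "skew M X Y \<longleftrightarrow> rank M X + rank M Y = rank M (X \<union> Y)"

definition basis :: "'a matroid \<Rightarrow> 'a set \<Rightarrow> bool" where
  "basis M B \<longleftrightarrow> B \<in> indeps M \<and> (\<forall>e \<in> gnd M - B. insert e B \<notin> indeps M)"

definition dual :: "'a matroid \<Rightarrow> 'a matroid" where
  "dual M = Matroid (gnd M) {X. X \<subseteq> gnd M \<and> (\<exists>B. basis M B \<and> X \<inter> B = {})}"

definition cocircuit :: "'a matroid \<Rightarrow> 'a set \<Rightarrow> bool" where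
  "cocircuit M D \<longleftrightarrow> circuit (dual M) D"

definition delete :: "'a matroid \<Rightarrow> 'a \<Rightarrow> 'a matroid" where
  "delete M e = Matroid (gnd M - {e}) {I \<in> indeps M. e \<notin> I}"

definition contract :: "'a matroid \<Rightarrow> 'a set \<Rightarrow> 'a matroid" where
  "contract M X = Matroid (gnd M - X)
     {I. I \<subseteq> gnd M - X \<and> rank M (I \<union> X) = card I + rank M X}"

definition flat :: "'a matroid \<Rightarrow> 'a set \<Rightarrow> bool" where
  "flat M F \<longleftrightarrow> F \<subseteq> gnd M \<and> (\<forall>e \<in> gnd M - F. rank M (insert e F) > rank M F)"

definition connected_matroid :: "'a matroid \<Rightarrow> bool" where
  "connected_matroid M \<longleftrightarrow>
     (\<forall>e \<in> gnd M. \<forall>f \<in> gnd M. e \<noteq> f \<longrightarrow> (\<exists>C. circuit M C \<and> e \<in> C \<and> f \<in> C))"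

definition unbreakable :: "'a matroid \<Rightarrow> bool" where
  "unbreakable M \<longleftrightarrow> connected_matroid M \<and> (\<forall>F. flat M F \<longrightarrow> connected_matroid (contract M F))"

definition SSCE :: "'a matroid \<Rightarrow> bool" where
  "SSCE M \<longleftrightarrow> (\<forall>C1 C2 e1 e2 e. circuit M C1 \<and> circuit M C2 \<and> e1 \<in> C1 - C2 \<and>
      e2 \<in> C2 - C1 \<and> e \<in> C1 \<inter> C2 \<longrightarrow>
      (\<exists>C3. circuit M C3 \<and> {e1, e2} \<subseteq> C3 \<and> C3 \<subseteq> (C1 \<union> C2) - {e}))"

definition has_skew_circuits :: "'a matroid \<Rightarrow> bool" where
  "has_skew_circuits M \<longleftrightarrow> (\<exists>C1 C2. circuit M C1 \<and> circuit M C2 \<and> C1 \<noteq> C2 \<and> skew M C1 C2)"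

inductive series_minor :: "'a matroid \<Rightarrow> 'a matroid \<Rightarrow> bool" where
  refl: "series_minor M M"
| del: "series_minor N M \<Longrightarrow> e \<in> gnd N \<Longrightarrow> series_minor (delete N e) M"
| scon: "series_minor N M \<Longrightarrow> cocircuit N {f, g} \<Longrightarrow> series_minor (contract N {f}) M"

definition iso :: "'a matroid \<Rightarrow> 'b matroid \<Rightarrow> bool" where
  "iso M N \<longleftrightarrow> (\<exists>\<phi>. bij_betw \<phi> (gnd M) (gnd N) \<and>
     (\<forall>X. X \<subseteq> gnd M \<longrightarrow> (X \<in> indeps M \<longleftrightarrow> \<phi> ` X \<in> indeps N)))"

definition uniform :: "nat \<Rightarrow> 'a set \<Rightarrow> 'a matroid" where
  "uniform r X = Matroid X {Y. Y \<subseteq> X \<and> card Y \<le> r}"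

definition series_connection :: "'a matroid \<Rightarrow> 'a matroid \<Rightarrow> 'a \<Rightarrow> 'a matroid" where
  "series_connection M1 M2 p =
     (let circs = {C. circuit M1 C \<and> p \<notin> C} \<union> {C. circuit M2 C \<and> p \<notin> C} \<union>
                  {C1 \<union> C2 | C1 C2. circuit M1 C1 \<and> p \<in> C1 \<and> circuit M2 C2 \<and> p \<in> C2}
      in Matroid (gnd M1 \<union> gnd M2) {X. X \<subseteq> gnd M1 \<union> gnd M2 \<and> (\<forall>C \<in> circs. \<not> C \<subseteq> X)})"

text \<open>S(U_{k-2,k}, U_{l-2,l}): U_{k-2,k} on {0..<k}, U_{l-2,l} on {k-1..<k-1+l},
  sharing exactly the basepoint k-1.\<close>
definition SU :: "nat \<Rightarrow> nat \<Rightarrow> nat matroid" where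
  "SU k l = series_connection (uniform (k - 2) {0..<k}) (uniform (l - 2) {k - 1..<k - 1 + l}) (k - 1)"

end

theory Submission
  imports Defs
begin

(*
  Two distinct skew circuits are disjoint, and no circuit inside their union crosses them.

  (i) <-> (ii). Without skew circuits, let K be the set of elements lying on a circuit through e1
  inside (C1 \<union> C2) - e. A circuit inside that set which meets K lies in K, so if e2 were not in
  K, the circuits through e1 and through e2 given by strong elimination would be skew. Conversely,
  if C1, C2 are skew in a connected matroid, take a circuit D meeting both with D - (C1 \<union> C2)
  minimal; three symmetric eliminations, through C1, C2 and D, give such a circuit with a
  smaller outside part.

  (ii) <-> (iv). The flats of M* are the complements of the cyclic sets of M, and M*/F is
  connected iff M restricted to E - F is. So (iv) says that every cyclic restriction of M is
  connected. A circuit on each side of a separation of a cyclic set gives a skew pair, and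
  the union of a skew pair is a separable cyclic set.

  (ii) <-> (iii). Deletion and series contraction preserve the absence of skew circuits, and
  S(U_{k-2,k}, U_{l-2,l}) has the skew circuits {0..k-2} and {k..k+l-2}. Conversely, skew circuits
  C1, C2 together with the outside part P of a minimal circuit connecting them form a
  restriction of nullity 3. Contracting series pairs inside P, C1 or C2 preserves this shape
  until P is a single element and C1, C2 contain no series pair; the matroid is then
  S(U_{k-2,k}, U_{l-2,l}) with k = |C1| + 1 and l = |C2| + 1.
*)

section \<open>Rank\<close>

lemma wf_matroidD:
  assumes "wf_matroid M"
  shows "finite (gnd M)" "indeps M \<subseteq> Pow (gnd M)" "{} \<in> indeps M"
    "\<And>X Y. X \<in> indeps M \<Longrightarrow> Y \<subseteq> X \<Longrightarrow> Y \<in> indeps M"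
    "\<And>X Y. X \<in> indeps M \<Longrightarrow> Y \<in> indeps M \<Longrightarrow> card X < card Y \<Longrightarrow> \<exists>e\<in>Y-X. insert e X \<in> indeps M"
  using assms unfolding wf_matroid_def by blast+

lemma indep_subset_gnd: "wf_matroid M \<Longrightarrow> I \<in> indeps M \<Longrightarrow> I \<subseteq> gnd M"
  using wf_matroidD(2) by blast

lemma finite_indep: "wf_matroid M \<Longrightarrow> I \<in> indeps M \<Longrightarrow> finite I"
  using indep_subset_gnd wf_matroidD(1) finite_subset by blast

lemma finite_indep_subsets: "wf_matroid M \<Longrightarrow> finite {Y. Y \<subseteq> X \<and> Y \<in> indeps M}"
proof -
  assume w: "wf_matroid M"
  have "{Y. Y \<subseteq> X \<and> Y \<in> indeps M} \<subseteq> Pow (gnd M)" using wf_matroidD(2)[OF w] by blast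
  then show ?thesis using wf_matroidD(1)[OF w] finite_subset by blast
qed

lemma card_le_rank: "wf_matroid M \<Longrightarrow> Y \<subseteq> X \<Longrightarrow> Y \<in> indeps M \<Longrightarrow> card Y \<le> rank M X"
  unfolding rank_def by (rule Max_ge) (auto intro: finite_imageI finite_indep_subsets)

lemma rank_witness: assumes "wf_matroid M" shows "\<exists>Y. Y \<subseteq> X \<and> Y \<in> indeps M \<and> card Y = rank M X"
proof -
  have ne: "card ` {Y. Y \<subseteq> X \<and> Y \<in> indeps M} \<noteq> {}" using wf_matroidD(3)[OF assms] by (metis (mono_tags, lifting) empty_iff empty_subsetI image_is_empty mem_Collect_eq)
  have "rank M X \<in> card ` {Y. Y \<subseteq> X \<and> Y \<in> indeps M}"
    unfolding rank_def by (rule Max_in[OF finite_imageI[OF finite_indep_subsets[OF assms]] ne])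
  then show ?thesis by force
qed

lemma indep_extend_rank_witness:
  assumes w: "wf_matroid M" and "I \<subseteq> X" "I \<in> indeps M"
  shows "\<exists>J. I \<subseteq> J \<and> J \<subseteq> X \<and> J \<in> indeps M \<and> card J = rank M X"
proof -
  define S where "S = {J. I \<subseteq> J \<and> J \<subseteq> X \<and> J \<in> indeps M}"
  have fS: "finite S" using finite_indep_subsets[OF w, of X] unfolding S_def by (rule finite_subset[rotated]) auto
  have neS: "S \<noteq> {}" using assms unfolding S_def by blast
  define m where "m = Max (card ` S)"
  have "m \<in> card ` S" unfolding m_def using fS neS by (intro Max_in) auto
  then obtain J where J: "J \<in> S" "card J = m" by blast
  have mx: "\<And>J'. J' \<in> S \<Longrightarrow> card J' \<le> m" unfolding m_def using fS by (intro Max_ge) auto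
  obtain K where K: "K \<subseteq> X" "K \<in> indeps M" "card K = rank M X" using rank_witness[OF w] by blast
  have "card J \<le> rank M X" using J card_le_rank[OF w] unfolding S_def by blast
  moreover have "\<not> card J < rank M X"
  proof
    assume "card J < rank M X"
    then obtain e where e: "e \<in> K - J" "insert e J \<in> indeps M" using wf_matroidD(5)[OF w, of J K] J K unfolding S_def by auto
    have "insert e J \<in> S" using e J K unfolding S_def by auto
    moreover have "card (insert e J) = Suc m" using e J finite_indep[OF w] unfolding S_def by auto
    ultimately show False using mx by fastforce
  qed
  ultimately show ?thesis using J unfolding S_def by auto
qed

lemma rank_mono: assumes w: "wf_matroid M" and "X \<subseteq> Y" shows "rank M X \<le> rank M Y"
proof -
  obtain I where "I \<subseteq> X" "I \<in> indeps M" "card I = rank M X" using rank_witness[OF w] by blast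
  then show ?thesis using card_le_rank[OF w, of I Y] assms(2) by auto
qed

lemma rank_le_card: assumes w: "wf_matroid M" and "finite X" shows "rank M X \<le> card X"
proof -
  obtain I where "I \<subseteq> X" "I \<in> indeps M" "card I = rank M X" using rank_witness[OF w] by blast
  then show ?thesis using card_mono[OF assms(2), of I] by auto
qed

lemma rank_indep_eq_card: assumes w: "wf_matroid M" and "I \<in> indeps M" shows "rank M I = card I"
  using card_le_rank[OF w order_refl assms(2)] rank_le_card[OF w finite_indep[OF w assms(2)]] by linarith

lemma indep_iff_rank: assumes w: "wf_matroid M" and X: "X \<subseteq> gnd M"
  shows "X \<in> indeps M \<longleftrightarrow> rank M X = card X"
proof
  assume r: "rank M X = card X"
  obtain Y where Y: "Y \<subseteq> X" "Y \<in> indeps M" "card Y = rank M X" using rank_witness[OF w] by blast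
  have f: "finite X" using X wf_matroidD(1)[OF w] finite_subset by blast
  have "Y = X" using card_subset_eq[OF f Y(1)] Y(3) r by simp
  then show "X \<in> indeps M" using Y(2) by simp
qed (simp add: rank_indep_eq_card[OF w])

lemma rank_empty: assumes "wf_matroid M" shows "rank M {} = 0"
  using rank_indep_eq_card[OF assms wf_matroidD(3)[OF assms]] by simp

lemma rank_insert_le_Suc: assumes w: "wf_matroid M" shows "rank M (insert e X) \<le> Suc (rank M X)"
proof -
  obtain J where J: "J \<subseteq> insert e X" "J \<in> indeps M" "card J = rank M (insert e X)" using rank_witness[OF w] by blast
  have "J - {e} \<in> indeps M" using wf_matroidD(4)[OF w J(2)] by blast
  moreover have "J - {e} \<subseteq> X" using J by blast
  ultimately have "card (J - {e}) \<le> rank M X" using card_le_rank[OF w] by blast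
  moreover have "card J \<le> Suc (card (J - {e}))" using finite_indep[OF w J(2)]
    by (cases "e \<in> J") (simp_all add: card_Diff_singleton)
  ultimately show ?thesis using J by linarith
qed

lemma rank_submod: assumes w: "wf_matroid M"
  shows "rank M (X \<union> Y) + rank M (X \<inter> Y) \<le> rank M X + rank M Y"
proof -
  obtain I where I: "I \<subseteq> X \<inter> Y" "I \<in> indeps M" "card I = rank M (X \<inter> Y)" using rank_witness[OF w] by blast
  obtain J where J: "I \<subseteq> J" "J \<subseteq> X \<union> Y" "J \<in> indeps M" "card J = rank M (X \<union> Y)"
    using indep_extend_rank_witness[OF w, of I "X \<union> Y"] I by blast
  have fJ: "finite J" using finite_indep[OF w J(3)] .
  have iX: "J \<inter> X \<in> indeps M" by (rule wf_matroidD(4)[OF w J(3)]) (rule Int_lower1)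
  have iY: "J \<inter> Y \<in> indeps M" by (rule wf_matroidD(4)[OF w J(3)]) (rule Int_lower1)
  have a: "card (J \<inter> X) \<le> rank M X" by (rule card_le_rank[OF w _ iX]) (rule Int_lower2)
  have b: "card (J \<inter> Y) \<le> rank M Y" by (rule card_le_rank[OF w _ iY]) (rule Int_lower2)
  have fX: "finite (J \<inter> X)" using fJ by simp
  have fY: "finite (J \<inter> Y)" using fJ by simp
  have c: "card (J \<inter> X) + card (J \<inter> Y) = card ((J \<inter> X) \<union> (J \<inter> Y)) + card ((J \<inter> X) \<inter> (J \<inter> Y))"
    by (rule card_Un_Int[OF fX fY])
  have d: "(J \<inter> X) \<union> (J \<inter> Y) = J" using J(2) by blast
  have s: "I \<subseteq> (J \<inter> X) \<inter> (J \<inter> Y)" using I(1) J(1) by blast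
  have e: "card I \<le> card ((J \<inter> X) \<inter> (J \<inter> Y))" by (rule card_mono[OF _ s]) (use fX in simp)
  have c2: "card (J \<inter> X) + card (J \<inter> Y) = card J + card ((J \<inter> X) \<inter> (J \<inter> Y))" using c d by simp
  show ?thesis using a b c2 e I(3) J(4) by linarith
qed

lemma rank_Un_le: "wf_matroid M \<Longrightarrow> rank M (X \<union> Y) \<le> rank M X + rank M Y"
  using rank_submod[of M X Y] by linarith

lemma rank_Un_le_card: assumes w: "wf_matroid M" and "finite Y" shows "rank M (X \<union> Y) \<le> rank M X + card Y"
  using rank_Un_le[OF w, of X Y] rank_le_card[OF w assms(2)] by linarith

lemma rank_le_rank_Diff_card: assumes w: "wf_matroid M" and "finite Y" shows "rank M X \<le> rank M (X - Y) + card Y"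
proof -
  have "rank M X \<le> rank M ((X - Y) \<union> Y)" by (rule rank_mono[OF w]) blast
  also have "\<dots> \<le> rank M (X - Y) + card Y" by (rule rank_Un_le_card[OF w assms(2)])
  finally show ?thesis .
qed

lemma spans_mono: assumes w: "wf_matroid M" and "rank M (insert e S) = rank M S" "S \<subseteq> T"
  shows "rank M (insert e T) = rank M T"
proof (cases "e \<in> T")
  case False
  have "rank M (insert e S \<union> T) + rank M (insert e S \<inter> T) \<le> rank M (insert e S) + rank M T"
    by (rule rank_submod[OF w])
  moreover have "insert e S \<union> T = insert e T" "insert e S \<inter> T = S" using False assms(3) by auto
  ultimately have "rank M (insert e T) \<le> rank M T" using assms(2) by simp
  then show ?thesis using rank_mono[OF w subset_insertI[of T e]] by linarith
qed (simp add: insert_absorb)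

section \<open>Circuits\<close>

lemma circuitD: assumes w: "wf_matroid M" and c: "circuit M C"
  shows "C \<subseteq> gnd M" "C \<notin> indeps M" "finite C" "C \<noteq> {}" "\<And>x. x \<in> C \<Longrightarrow> C - {x} \<in> indeps M"
    "rank M C = card C - 1" "\<And>x. x \<in> C \<Longrightarrow> rank M (C - {x}) = rank M C"
proof -
  show 1: "C \<subseteq> gnd M" "C \<notin> indeps M" using c unfolding circuit_def by auto
  show 2: "finite C" using 1 wf_matroidD(1)[OF w] finite_subset by blast
  show 3: "C \<noteq> {}" using 1 wf_matroidD(3)[OF w] by auto
  show 4: "\<And>x. x \<in> C \<Longrightarrow> C - {x} \<in> indeps M" using c unfolding circuit_def by blast
  obtain x where x: "x \<in> C" using 3 by blast
  have r1: "rank M C < card C" using 1 indep_iff_rank[OF w 1(1)] rank_le_card[OF w 2] by linarith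
  have "rank M (C - {x}) = card C - 1" using rank_indep_eq_card[OF w 4[OF x]] x 2 by simp
  moreover have "rank M (C - {x}) \<le> rank M C" by (rule rank_mono[OF w]) blast
  ultimately show 5: "rank M C = card C - 1" using r1 by linarith
  fix y assume "y \<in> C"
  then show "rank M (C - {y}) = rank M C" using rank_indep_eq_card[OF w 4] 2 5 by simp
qed

lemma circuitI: assumes w: "wf_matroid M" and "C \<subseteq> gnd M" "C \<notin> indeps M" "\<forall>x\<in>C. C - {x} \<in> indeps M"
  shows "circuit M C"
  unfolding circuit_def
proof (intro conjI allI impI)
  fix D assume "D \<subset> C"
  then obtain x where "x \<in> C" "D \<subseteq> C - {x}" by blast
  then have "C - {x} \<in> indeps M" "D \<subseteq> C - {x}" using assms(4) by blast+
  then show "D \<in> indeps M" using wf_matroidD(4)[OF w] by blast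
qed (use assms in auto)

lemma circuit_subset_eq: "circuit M C \<Longrightarrow> circuit M D \<Longrightarrow> C \<subseteq> D \<Longrightarrow> C = D"
  unfolding circuit_def by blast

lemma dependent_contains_circuit: assumes w: "wf_matroid M"
  shows "X \<subseteq> gnd M \<Longrightarrow> X \<notin> indeps M \<Longrightarrow> \<exists>C. C \<subseteq> X \<and> circuit M C"
proof (induction "card X" arbitrary: X rule: less_induct)
  case less
  show ?case
  proof (cases "\<forall>x\<in>X. X - {x} \<in> indeps M")
    case True
    have "circuit M X" by (rule circuitI[OF w less.prems True])
    then show ?thesis by blast
  next
    case False
    then obtain x where x: "x \<in> X" "X - {x} \<notin> indeps M" by blast
    have "finite X" using less.prems(1) wf_matroidD(1)[OF w] finite_subset by blast
    then have lt: "card (X - {x}) < card X" using x(1) by (rule card_Diff1_less)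
    have sub: "X - {x} \<subseteq> gnd M" using less.prems(1) by blast
    obtain C where "C \<subseteq> X - {x}" "circuit M C" using less.hyps[OF lt sub x(2)] by blast
    then show ?thesis by blast
  qed
qed

lemma circuit_through_spanned: assumes w: "wf_matroid M" and "S \<subseteq> gnd M" "x \<in> gnd M" "x \<notin> S"
  "rank M (insert x S) = rank M S"
  shows "\<exists>C. circuit M C \<and> x \<in> C \<and> C \<subseteq> insert x S"
proof -
  obtain I where I: "I \<subseteq> S" "I \<in> indeps M" "card I = rank M S" using rank_witness[OF w] by blast
  have fI: "finite I" using finite_indep[OF w I(2)] .
  have "insert x I \<notin> indeps M"
  proof
    assume "insert x I \<in> indeps M"
    moreover have "insert x I \<subseteq> insert x S" using I(1) by blast
    ultimately have "card (insert x I) \<le> rank M (insert x S)" using card_le_rank[OF w] by blast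
    moreover have "x \<notin> I" using I(1) assms(4) by blast
    ultimately show False using I(3) fI assms(5) by simp
  qed
  moreover have "insert x I \<subseteq> gnd M" using I assms by blast
  ultimately obtain C where C: "C \<subseteq> insert x I" "circuit M C" using dependent_contains_circuit[OF w] by blast
  have "x \<in> C"
  proof (rule ccontr)
    assume "x \<notin> C"
    then have "C \<subseteq> I" using C by blast
    then have "C \<in> indeps M" by (rule wf_matroidD(4)[OF w I(2)])
    then show False using C unfolding circuit_def by blast
  qed
  then show ?thesis using C I by blast
qed

lemma circuit_element_spanned: assumes w: "wf_matroid M" and c: "circuit M C" and x: "x \<in> C" and S: "C - {x} \<subseteq> S"
  shows "rank M (insert x S) = rank M S"
proof -
  have "rank M (insert x (C - {x})) = rank M (C - {x})"
    using circuitD(7)[OF w c x] x by (simp add: insert_absorb)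
  then show ?thesis using spans_mono[OF w] S by blast
qed

lemma strong_circuit_elimination: assumes w: "wf_matroid M" and c1: "circuit M C1" and c2: "circuit M C2"
  and e: "e \<in> C1 \<inter> C2" and f: "f \<in> C1 - C2"
  shows "\<exists>C. circuit M C \<and> f \<in> C \<and> C \<subseteq> (C1 \<union> C2) - {e}"
proof -
  define Y where "Y = (C1 \<union> C2) - {e, f}"
  have ef: "e \<noteq> f" using e f by blast
  have 1: "rank M (insert e Y) = rank M Y"
    by (rule circuit_element_spanned[OF w c2]) (use e f in \<open>auto simp: Y_def\<close>)
  have 2: "rank M (insert f (insert e Y)) = rank M (insert e Y)"
    by (rule circuit_element_spanned[OF w c1]) (use e f in \<open>auto simp: Y_def\<close>)
  have "rank M (insert f Y) \<le> rank M (insert f (insert e Y))" by (rule rank_mono[OF w]) blast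
  then have 3: "rank M (insert f Y) = rank M Y" using 1 2 rank_mono[OF w subset_insertI[of Y f]] by linarith
  have sub: "Y \<subseteq> gnd M" "f \<in> gnd M" using circuitD(1)[OF w c1] circuitD(1)[OF w c2] f
    unfolding Y_def by auto
  have fY: "f \<notin> Y" unfolding Y_def by blast
  obtain C where "circuit M C" "f \<in> C" "C \<subseteq> insert f Y"
    using circuit_through_spanned[OF w sub fY 3] by blast
  moreover have "insert f Y \<subseteq> (C1 \<union> C2) - {e}" using f ef unfolding Y_def by auto
  ultimately show ?thesis by blast
qed

lemma circuit_connection_trans: assumes w: "wf_matroid M"
  shows "circuit M C1 \<Longrightarrow> circuit M C2 \<Longrightarrow> C1 \<inter> C2 \<noteq> {} \<Longrightarrow> x \<in> C1 \<Longrightarrow> z \<in> C2 \<Longrightarrow>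
    \<exists>C. circuit M C \<and> x \<in> C \<and> z \<in> C \<and> C \<subseteq> C1 \<union> C2"
proof (induction "card (C1 \<union> C2)" arbitrary: C1 C2 rule: less_induct)
  case less
  show ?case
  proof (cases "x \<in> C2 \<or> z \<in> C1")
    case True
    then show ?thesis using less.prems by blast
  next
    case False
    obtain y where y: "y \<in> C1 \<inter> C2" using less.prems by blast
    obtain C3 where C3: "circuit M C3" "x \<in> C3" "C3 \<subseteq> (C1 \<union> C2) - {y}"
      using strong_circuit_elimination[OF w less.prems(1,2) y, of x] less.prems False by blast
    obtain C4 where C4: "circuit M C4" "z \<in> C4" "C4 \<subseteq> (C1 \<union> C2) - {y}"
      using strong_circuit_elimination[OF w less.prems(2,1), of y z] y less.prems False by blast
    have fin: "finite (C1 \<union> C2)" using circuitD(3)[OF w] less.prems by blast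
    show ?thesis
    proof (cases "C3 \<inter> C4 = {}")
      case False
      have "card (C3 \<union> C4) < card (C1 \<union> C2)"
        using C3 C4 y fin by (intro psubset_card_mono) auto
      then obtain C where "circuit M C \<and> x \<in> C \<and> z \<in> C \<and> C \<subseteq> C3 \<union> C4"
        using less.hyps[of C3 C4] C3 C4 False by blast
      then show ?thesis using C3 C4 by blast
    next
      case True
      have "\<not> C4 \<subseteq> C2"
      proof
        assume "C4 \<subseteq> C2"
        then have "C4 = C2" using circuit_subset_eq C4 less.prems by blast
        then show False using C4 y by blast
      qed
      then obtain w' where w': "w' \<in> C4" "w' \<notin> C2" by blast
      have "\<not> C3 \<subseteq> C1"
      proof
        assume "C3 \<subseteq> C1"
        then have "C3 = C1" using circuit_subset_eq C3 less.prems by blast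
        then show False using C3 y by blast
      qed
      then obtain w where ww: "w \<in> C3" "w \<notin> C1" by blast
      have "w \<in> C2" using ww C3 by blast
      have "w' \<notin> C3" using True w' by blast
      have "w' \<in> C1" using w' C4 by blast
      have "card (C3 \<union> C2) < card (C1 \<union> C2)"
        using C3 fin \<open>w' \<notin> C3\<close> \<open>w' \<in> C1\<close> w' by (intro psubset_card_mono) auto
      then obtain C where "circuit M C \<and> x \<in> C \<and> z \<in> C \<and> C \<subseteq> C3 \<union> C2"
        using less.hyps[of C3 C2] C3 less.prems \<open>w \<in> C2\<close> ww by blast
      then show ?thesis using C3 by blast
    qed
  qed
qed

section \<open>Skew sets\<close>

lemma skew_if_no_crossing_circuit: assumes w: "wf_matroid M" and d: "A \<inter> B = {}"
  and nc: "\<And>C. circuit M C \<Longrightarrow> C \<subseteq> A \<union> B \<Longrightarrow> C \<subseteq> A \<or> C \<subseteq> B"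
  shows "skew M A B"
proof -
  obtain I where I: "I \<subseteq> A" "I \<in> indeps M" "card I = rank M A" using rank_witness[OF w] by blast
  obtain J where J: "J \<subseteq> B" "J \<in> indeps M" "card J = rank M B" using rank_witness[OF w] by blast
  have IJ: "I \<union> J \<in> indeps M"
  proof (rule ccontr)
    assume n: "I \<union> J \<notin> indeps M"
    have "I \<union> J \<subseteq> gnd M" using indep_subset_gnd[OF w I(2)] indep_subset_gnd[OF w J(2)] by blast
    then obtain C where C: "C \<subseteq> I \<union> J" "circuit M C" using dependent_contains_circuit[OF w _ n] by blast
    have "C \<subseteq> A \<or> C \<subseteq> B" using nc C I(1) J(1) by blast
    then have "C \<subseteq> I \<or> C \<subseteq> J" using C(1) I(1) J(1) d by blast
    then have "C \<in> indeps M" using wf_matroidD(4)[OF w I(2)] wf_matroidD(4)[OF w J(2)] by blast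
    then show False using circuitD(2)[OF w C(2)] by blast
  qed
  have "I \<inter> J = {}" using I(1) J(1) d by blast
  then have "card (I \<union> J) = card I + card J"
    using finite_indep[OF w I(2)] finite_indep[OF w J(2)] by (simp add: card_Un_disjoint)
  moreover have "I \<union> J \<subseteq> A \<union> B" using I(1) J(1) by blast
  ultimately have "rank M A + rank M B \<le> rank M (A \<union> B)" using card_le_rank[OF w _ IJ] I(3) J(3) by metis
  then show ?thesis using rank_Un_le[OF w, of A B] unfolding skew_def by linarith
qed

lemma skew_subsets: assumes w: "wf_matroid M" and d: "A \<inter> B = {}" and sk: "skew M A B"
  and S: "S \<subseteq> A" and T: "T \<subseteq> B"
  shows "skew M S T"
proof -
  have s1: "rank M ((A \<union> T) \<union> B) + rank M ((A \<union> T) \<inter> B) \<le> rank M (A \<union> T) + rank M B"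
    by (rule rank_submod[OF w])
  have e1: "(A \<union> T) \<union> B = A \<union> B" "(A \<union> T) \<inter> B = T" using d T by blast+
  have s2: "rank M ((S \<union> T) \<union> A) + rank M ((S \<union> T) \<inter> A) \<le> rank M (S \<union> T) + rank M A"
    by (rule rank_submod[OF w])
  have e2: "(S \<union> T) \<union> A = A \<union> T" "(S \<union> T) \<inter> A = S" using d S T by blast+
  have "rank M S + rank M T \<le> rank M (S \<union> T)" using s1 s2 e1 e2 sk unfolding skew_def by simp
  then show ?thesis using rank_Un_le[OF w, of S T] unfolding skew_def by linarith
qed

lemma circuit_inside_skew_side: assumes w: "wf_matroid M" and d: "A \<inter> B = {}" and sk: "skew M A B"
  and c: "circuit M C" and CAB: "C \<subseteq> A \<union> B"
  shows "C \<subseteq> A \<or> C \<subseteq> B"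
proof (rule ccontr)
  assume "\<not> (C \<subseteq> A \<or> C \<subseteq> B)"
  then obtain x y where xy: "x \<in> C" "x \<notin> B" "y \<in> C" "y \<notin> A" by blast
  have fC: "finite C" using circuitD(3)[OF w c] .
  have iA: "C \<inter> A \<in> indeps M"
    by (rule wf_matroidD(4)[OF w circuitD(5)[OF w c xy(3)]]) (use xy in blast)
  have iB: "C \<inter> B \<in> indeps M"
    by (rule wf_matroidD(4)[OF w circuitD(5)[OF w c xy(1)]]) (use xy in blast)
  have "skew M (C \<inter> A) (C \<inter> B)" by (rule skew_subsets[OF w d sk]) blast+
  moreover have "(C \<inter> A) \<union> (C \<inter> B) = C" using CAB by blast
  moreover have "card (C \<inter> A) + card (C \<inter> B) = card C"
  proof -
    have "card ((C \<inter> A) \<union> (C \<inter> B)) = card (C \<inter> A) + card (C \<inter> B)"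
      by (rule card_Un_disjoint) (use fC d in auto)
    then show ?thesis using CAB by (metis Int_Un_distrib Int_absorb2)
  qed
  ultimately have "card C = rank M C"
    using rank_indep_eq_card[OF w iA] rank_indep_eq_card[OF w iB] unfolding skew_def by simp
  moreover have "card C \<noteq> 0" using circuitD(3,4)[OF w c] by simp
  ultimately show False using circuitD(6)[OF w c] by linarith
qed

lemma skew_circuits_disjoint: assumes w: "wf_matroid M" and c1: "circuit M C1" and c2: "circuit M C2"
  and ne: "C1 \<noteq> C2" and sk: "skew M C1 C2"
  shows "C1 \<inter> C2 = {}"
proof (rule ccontr)
  assume nd: "C1 \<inter> C2 \<noteq> {}"
  have "rank M (C1 \<union> C2) + rank M (C1 \<inter> C2) \<le> rank M C1 + rank M C2" by (rule rank_submod[OF w])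
  then have r0: "rank M (C1 \<inter> C2) = 0" using sk unfolding skew_def by linarith
  have "\<not> C1 \<subseteq> C2" using circuit_subset_eq[OF c1 c2] ne by blast
  then obtain x where x: "x \<in> C1" "x \<notin> C2" by blast
  have "C1 \<inter> C2 \<in> indeps M" by (rule wf_matroidD(4)[OF w circuitD(5)[OF w c1 x(1)]]) (use x in blast)
  then have "rank M (C1 \<inter> C2) = card (C1 \<inter> C2)" by (rule rank_indep_eq_card[OF w])
  moreover have "finite (C1 \<inter> C2)" using circuitD(3)[OF w c1] by simp
  ultimately show False using r0 nd by simp
qed

section \<open>Symmetric strong circuit elimination\<close>

definition circuit_component :: "'a matroid \<Rightarrow> 'a set \<Rightarrow> 'a \<Rightarrow> 'a set" where
  "circuit_component M X x = {z. \<exists>C. circuit M C \<and> C \<subseteq> X \<and> x \<in> C \<and> z \<in> C}"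

lemma circuit_component_closed:
  assumes w: "wf_matroid M" and C: "circuit M C" "C \<subseteq> X" "C \<inter> circuit_component M X x \<noteq> {}"
  shows "C \<subseteq> circuit_component M X x"
proof
  fix u assume u: "u \<in> C"
  obtain z C' where C': "circuit M C'" "C' \<subseteq> X" "x \<in> C'" "z \<in> C'" "z \<in> C"
    using C(3) unfolding circuit_component_def by blast
  then obtain C'' where "circuit M C''" "x \<in> C''" "u \<in> C''" "C'' \<subseteq> C' \<union> C"
    using circuit_connection_trans[OF w C'(1) C(1) _ C'(3) u] by blast
  then show "u \<in> circuit_component M X x" using C'(2) C(2) unfolding circuit_component_def by blast
qed

lemma skew_if_circuit_closed:
  assumes w: "wf_matroid M"
    and closed: "\<And>C. circuit M C \<Longrightarrow> C \<subseteq> X \<Longrightarrow> C \<inter> K \<noteq> {} \<Longrightarrow> C \<subseteq> K"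
    and A: "A \<subseteq> X \<inter> K" and B: "B \<subseteq> X - K"
  shows "skew M A B"
proof (rule skew_if_no_crossing_circuit[OF w])
  show "A \<inter> B = {}" using A B by blast
  fix C assume "circuit M C" "C \<subseteq> A \<union> B"
  then show "C \<subseteq> A \<or> C \<subseteq> B" using closed[of C] A B by blast
qed

lemma SSCE_if_no_skew_circuits:
  assumes w: "wf_matroid M" and ns: "\<not> has_skew_circuits M"
  shows "SSCE M"
  unfolding SSCE_def
proof (intro allI impI)
  fix C1 C2 e1 e2 e
  assume "circuit M C1 \<and> circuit M C2 \<and> e1 \<in> C1 - C2 \<and> e2 \<in> C2 - C1 \<and> e \<in> C1 \<inter> C2"
  then have c1: "circuit M C1" and c2: "circuit M C2" and e1: "e1 \<in> C1 - C2" and e2: "e2 \<in> C2 - C1"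
    and e: "e \<in> C1 \<inter> C2" by auto
  define X where "X = (C1 \<union> C2) - {e}"
  define K where "K = circuit_component M X e1"
  obtain D1 where D1: "circuit M D1" "e1 \<in> D1" "D1 \<subseteq> X"
    using strong_circuit_elimination[OF w c1 c2 e e1] unfolding X_def by blast
  obtain D2 where D2: "circuit M D2" "e2 \<in> D2" "D2 \<subseteq> X"
    using strong_circuit_elimination[OF w c2 c1 _ e2] e unfolding X_def by blast
  have closed: "C \<subseteq> K" if "circuit M C" "C \<subseteq> X" "C \<inter> K \<noteq> {}" for C
    using circuit_component_closed[OF w, of C X e1] that unfolding K_def by blast
  show "\<exists>C3. circuit M C3 \<and> {e1, e2} \<subseteq> C3 \<and> C3 \<subseteq> C1 \<union> C2 - {e}"
  proof (rule ccontr)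
    assume "\<nexists>C3. circuit M C3 \<and> {e1, e2} \<subseteq> C3 \<and> C3 \<subseteq> C1 \<union> C2 - {e}"
    then have "e2 \<notin> K" unfolding K_def circuit_component_def X_def by blast
    then have D2K: "D2 \<subseteq> X - K" using closed[OF D2(1,3)] D2 by blast
    have D1K: "D1 \<subseteq> X \<inter> K" using D1 unfolding K_def circuit_component_def by blast
    have "skew M D1 D2" by (rule skew_if_circuit_closed[OF w closed D1K D2K])
    moreover have "D1 \<noteq> D2" using D1K D2K D1(2) by blast
    ultimately show False using ns D1(1) D2(1) unfolding has_skew_circuits_def by blast
  qed
qed

lemma minimal_connecting_circuit:
  assumes w: "wf_matroid M" and conn: "connected_matroid M"
    and c1: "circuit M C1" and c2: "circuit M C2" and disj: "C1 \<inter> C2 = {}"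
  obtains D where "circuit M D" "D \<inter> C1 \<noteq> {}" "D \<inter> C2 \<noteq> {}"
    "\<And>D'. circuit M D' \<Longrightarrow> D' \<inter> C1 \<noteq> {} \<Longrightarrow> D' \<inter> C2 \<noteq> {} \<Longrightarrow>
      card (D - (C1 \<union> C2)) \<le> card (D' - (C1 \<union> C2))"
proof -
  obtain a b where a: "a \<in> C1" and b: "b \<in> C2" using circuitD(4)[OF w c1] circuitD(4)[OF w c2] by blast
  have "a \<noteq> b" using a b disj by blast
  moreover have "a \<in> gnd M" "b \<in> gnd M" using a b circuitD(1)[OF w c1] circuitD(1)[OF w c2] by blast+
  ultimately obtain D0 where D0: "circuit M D0" "a \<in> D0" "b \<in> D0" using conn unfolding connected_matroid_def by blast
  define connecting where "connecting D \<longleftrightarrow> circuit M D \<and> D \<inter> C1 \<noteq> {} \<and> D \<inter> C2 \<noteq> {}" for D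
  have "connecting D0" unfolding connecting_def using D0 a b by blast
  then obtain D where "connecting D" "\<And>D'. connecting D' \<Longrightarrow> card (D - (C1 \<union> C2)) \<le> card (D' - (C1 \<union> C2))"
    using ex_has_least_nat[of connecting D0 "\<lambda>D. card (D - (C1 \<union> C2))"] by blast
  then show ?thesis using that unfolding connecting_def by blast
qed

lemma no_skew_circuits_if_SSCE:
  assumes w: "wf_matroid M" and conn: "connected_matroid M" and ss: "SSCE M"
  shows "\<not> has_skew_circuits M"
proof
  assume "has_skew_circuits M"
  then obtain C1 C2 where c1: "circuit M C1" and c2: "circuit M C2" and ne: "C1 \<noteq> C2" and sk: "skew M C1 C2"
    unfolding has_skew_circuits_def by blast
  have disj: "C1 \<inter> C2 = {}" by (rule skew_circuits_disjoint[OF w c1 c2 ne sk])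
  have elim: "\<exists>C3. circuit M C3 \<and> {x1, x2} \<subseteq> C3 \<and> C3 \<subseteq> (A \<union> B) - {x}"
    if "circuit M A" "circuit M B" "x1 \<in> A - B" "x2 \<in> B - A" "x \<in> A \<inter> B" for A B x1 x2 x
    using ss that unfolding SSCE_def by blast
  define connecting where "connecting D \<longleftrightarrow> circuit M D \<and> D \<inter> C1 \<noteq> {} \<and> D \<inter> C2 \<noteq> {}" for D
  obtain D where cD: "circuit M D" and D: "connecting D"
    and mn: "\<And>D'. connecting D' \<Longrightarrow> card (D - (C1 \<union> C2)) \<le> card (D' - (C1 \<union> C2))"
    using minimal_connecting_circuit[OF w conn c1 c2 disj] unfolding connecting_def by metis
  define P where "P = D - (C1 \<union> C2)"
  have fP: "finite P" unfolding P_def using circuitD(3)[OF w cD] by simp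
  have keeps_P: "P \<subseteq> D'" if "connecting D'" "D' - (C1 \<union> C2) \<subseteq> P" for D'
    using card_subset_eq[OF fP that(2)] mn[OF that(1)] card_mono[OF fP that(2)] unfolding P_def by fastforce
  obtain p where p: "p \<in> P"
  proof -
    have "\<not> D \<subseteq> C1 \<union> C2"
      using circuit_inside_skew_side[OF w disj sk cD] D disj unfolding connecting_def by blast
    then show ?thesis using that unfolding P_def by blast
  qed
  obtain a1 b1 where a1: "a1 \<in> D" "a1 \<in> C1" and b1: "b1 \<in> D" "b1 \<in> C2" using D unfolding connecting_def by blast
  obtain c where c: "c \<in> C1" "c \<notin> D"
    using circuit_subset_eq[OF c1 cD] b1 disj by blast
  obtain c' where c': "c' \<in> C2" "c' \<notin> D"
    using circuit_subset_eq[OF c2 cD] a1 disj by blast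
  obtain D' where D': "circuit M D'" "{c, b1} \<subseteq> D'" "D' \<subseteq> (C1 \<union> D) - {a1}"
    using elim[OF c1 cD, of c b1 a1] c b1 a1 disj by blast
  have PD': "P \<subseteq> D'" using keeps_P[of D'] D' c b1 unfolding connecting_def P_def by blast
  obtain D'' where D'': "circuit M D''" "{c', c} \<subseteq> D''" "D'' \<subseteq> (C2 \<union> D') - {b1}"
    using elim[OF c2 D'(1), of c' c b1] c' D' c b1 disj by blast
  have PD'': "P \<subseteq> D''" using keeps_P[of D''] D'' D'(3) c c' unfolding connecting_def P_def by blast
  obtain D3 where D3: "circuit M D3" "{a1, c'} \<subseteq> D3" "D3 \<subseteq> (D \<union> D'') - {p}"
    using elim[OF cD D''(1), of a1 c' p] a1 c' D'' D'(3) p PD'' disj unfolding P_def by blast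
  have "connecting D3" unfolding connecting_def using D3 a1 c' by blast
  moreover have "D3 - (C1 \<union> C2) \<subseteq> P - {p}" using D3(3) D''(3) D'(3) unfolding P_def by blast
  then have "card (D3 - (C1 \<union> C2)) < card P"
    using fP p by (meson card_Diff1_less card_mono finite_Diff le_less_trans)
  ultimately show False using mn unfolding P_def by fastforce
qed

lemma SSCE_iff_no_skew_circuits:
  assumes "wf_matroid M" and "connected_matroid M"
  shows "SSCE M \<longleftrightarrow> \<not> has_skew_circuits M"
  using SSCE_if_no_skew_circuits no_skew_circuits_if_SSCE assms by blast

section \<open>Rank functions, duals and minors\<close>

definition matroid_of_rank :: "'a set \<Rightarrow> ('a set \<Rightarrow> nat) \<Rightarrow> 'a matroid" where
  "matroid_of_rank G \<rho> = Matroid G {I. I \<subseteq> G \<and> \<rho> I = card I}"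

lemma gnd_matroid_of_rank [simp]: "gnd (matroid_of_rank G \<rho>) = G"
  and indeps_matroid_of_rank [simp]: "indeps (matroid_of_rank G \<rho>) = {I. I \<subseteq> G \<and> \<rho> I = card I}"
  unfolding matroid_of_rank_def by simp_all

locale rank_function =
  fixes G :: "'a set" and \<rho> :: "'a set \<Rightarrow> nat"
  assumes finite_ground: "finite G" and empty_eq_0: "\<rho> {} = 0"
    and insert_le_Suc: "\<And>X e. X \<subseteq> G \<Longrightarrow> e \<in> G \<Longrightarrow> \<rho> (insert e X) \<le> Suc (\<rho> X)"
    and mono: "\<And>X Y. X \<subseteq> Y \<Longrightarrow> Y \<subseteq> G \<Longrightarrow> \<rho> X \<le> \<rho> Y"
    and submod: "\<And>X Y. X \<subseteq> G \<Longrightarrow> Y \<subseteq> G \<Longrightarrow> \<rho> (X \<union> Y) + \<rho> (X \<inter> Y) \<le> \<rho> X + \<rho> Y"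
begin

lemma Un_le_card: "finite S \<Longrightarrow> X \<union> S \<subseteq> G \<Longrightarrow> \<rho> (X \<union> S) \<le> \<rho> X + card S"
proof (induction S rule: finite_induct)
  case (insert e S)
  have "\<rho> (insert e (X \<union> S)) \<le> Suc (\<rho> (X \<union> S))" by (rule insert_le_Suc) (use insert.prems in auto)
  then show ?case using insert by simp
qed simp

lemma le_card: assumes "X \<subseteq> G" shows "\<rho> X \<le> card X"
proof -
  have "finite X" using assms finite_ground finite_subset by blast
  then have "\<rho> ({} \<union> X) \<le> \<rho> {} + card X" by (rule Un_le_card) (use assms in simp)
  then show ?thesis using empty_eq_0 by simp
qed

lemma indep_subset: assumes "I \<subseteq> G" "\<rho> I = card I" "J \<subseteq> I" shows "\<rho> J = card J"
proof -
  have fI: "finite I" using assms(1) finite_ground finite_subset by blast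
  have "\<rho> (J \<union> (I - J)) \<le> \<rho> J + card (I - J)" by (rule Un_le_card) (use fI assms in auto)
  moreover have "J \<union> (I - J) = I" using assms(3) by blast
  ultimately have a: "\<rho> I \<le> \<rho> J + card (I - J)" by simp
  moreover have "card I = card J + card (I - J)"
  proof -
    have fJ: "finite J" using fI assms(3) finite_subset by blast
    have "card (I - J) = card I - card J" by (rule card_Diff_subset[OF fJ assms(3)])
    moreover have "card J \<le> card I" by (rule card_mono[OF fI assms(3)])
    ultimately show ?thesis by linarith
  qed
  ultimately have "card J \<le> \<rho> J" using assms(2) by linarith
  moreover have "\<rho> J \<le> card J" by (rule le_card) (use assms in blast)
  ultimately show ?thesis by linarith
qed

lemma basis_witness: assumes "X \<subseteq> G" shows "\<exists>I. I \<subseteq> X \<and> \<rho> I = card I \<and> card I = \<rho> X"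
proof -
  have fX: "finite X" using assms finite_ground finite_subset by blast
  show ?thesis using fX assms
  proof (induction X rule: finite_induct)
    case empty
    then show ?case using empty_eq_0 by auto
  next
    case (insert e F)
    then obtain I where I: "I \<subseteq> F" "\<rho> I = card I" "card I = \<rho> F" by blast
    have FG: "F \<subseteq> G" "e \<in> G" using insert.prems by auto
    have u: "\<rho> (insert e F) \<le> Suc (\<rho> F)" by (rule insert_le_Suc[OF FG])
    have m: "\<rho> F \<le> \<rho> (insert e F)" by (rule mono) (use insert.prems in auto)
    show ?case
    proof (cases "\<rho> (insert e F) = \<rho> F")
      case True
      then show ?thesis using I by auto
    next
      case False
      then have s: "\<rho> (insert e F) = Suc (\<rho> F)" using u m by linarith
      have "\<rho> (insert e I \<union> F) + \<rho> (insert e I \<inter> F) \<le> \<rho> (insert e I) + \<rho> F"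
        by (rule submod) (use I FG in auto)
      moreover have "insert e I \<union> F = insert e F" "insert e I \<inter> F = I" using I(1) insert.hyps(2) by auto
      ultimately have "Suc (card I) \<le> \<rho> (insert e I)" using s I by simp
      moreover have "e \<notin> I" using I(1) insert.hyps(2) by blast
      moreover have "finite I" using I(1) insert.hyps(1) finite_subset by blast
      moreover have "\<rho> (insert e I) \<le> card (insert e I)" by (rule le_card) (use I FG in auto)
      ultimately have "\<rho> (insert e I) = card (insert e I)" by simp
      moreover have "card (insert e I) = \<rho> (insert e F)" using s I \<open>e \<notin> I\<close> \<open>finite I\<close> by simp
      ultimately show ?thesis using I(1) by (intro exI[of _ "insert e I"]) auto
    qed
  qed
qed

lemma Un_spanned: assumes "finite S" "X \<subseteq> G" "S \<subseteq> G" "\<forall>e\<in>S. \<rho> (insert e X) = \<rho> X"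
  shows "\<rho> (X \<union> S) = \<rho> X"
  using assms
proof (induction S rule: finite_induct)
  case (insert e S)
  then have IH: "\<rho> (X \<union> S) = \<rho> X" by auto
  have "\<rho> ((X \<union> S) \<union> insert e X) + \<rho> ((X \<union> S) \<inter> insert e X) \<le> \<rho> (X \<union> S) + \<rho> (insert e X)"
    by (rule submod) (use insert.prems in auto)
  moreover have "(X \<union> S) \<union> insert e X = X \<union> insert e S" by auto
  moreover have "(X \<union> S) \<inter> insert e X = X" using insert.hyps(2) by auto
  moreover have "\<rho> (insert e X) = \<rho> X" using insert.prems by auto
  ultimately have "\<rho> (X \<union> insert e S) \<le> \<rho> X" using IH by simp
  moreover have "\<rho> X \<le> \<rho> (X \<union> insert e S)" by (rule mono) (use insert.prems in auto)
  ultimately show ?case by linarith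
qed simp

lemma wf_matroid_of_rank: "wf_matroid (matroid_of_rank G \<rho>)"
  unfolding wf_matroid_def
proof (intro conjI allI impI)
  fix X Y assume h: "X \<in> indeps (matroid_of_rank G \<rho>) \<and> Y \<subseteq> X"
  then show "Y \<in> indeps (matroid_of_rank G \<rho>)" using indep_subset[of X Y] by auto
next
  fix X Y assume h: "X \<in> indeps (matroid_of_rank G \<rho>) \<and>
           Y \<in> indeps (matroid_of_rank G \<rho>) \<and> card X < card Y"
  then have X: "X \<subseteq> G" "\<rho> X = card X" and Y: "Y \<subseteq> G" "\<rho> Y = card Y" and lt: "card X < card Y" by auto
  have fX: "finite X" using X finite_ground finite_subset by blast
  show "\<exists>e\<in>Y - X. insert e X \<in> indeps (matroid_of_rank G \<rho>)"
  proof (rule ccontr)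
    assume n: "\<not> ?thesis"
    have eq: "\<forall>e\<in>Y - X. \<rho> (insert e X) = \<rho> X"
    proof
      fix e assume e: "e \<in> Y - X"
      then have "\<rho> (insert e X) \<noteq> card (insert e X)" using n X Y by auto
      moreover have "card (insert e X) = Suc (\<rho> X)" using e fX X by simp
      moreover have "\<rho> (insert e X) \<le> Suc (\<rho> X)" by (rule insert_le_Suc) (use X Y e in auto)
      moreover have "\<rho> X \<le> \<rho> (insert e X)" by (rule mono) (use X Y e in auto)
      ultimately show "\<rho> (insert e X) = \<rho> X" by linarith
    qed
    have fY: "finite (Y - X)" using Y finite_ground finite_subset by blast
    have "\<rho> (X \<union> (Y - X)) = \<rho> X" by (rule Un_spanned[OF fY X(1) _ eq]) (use Y in blast)
    moreover have "\<rho> Y \<le> \<rho> (X \<union> (Y - X))" by (rule mono) (use X Y in auto)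
    ultimately show False using X Y lt by linarith
  qed
qed (use finite_ground empty_eq_0 in auto)

lemma rank_matroid_of_rank: assumes "X \<subseteq> G" shows "rank (matroid_of_rank G \<rho>) X = \<rho> X"
proof -
  let ?A = "card ` {Y. Y \<subseteq> X \<and> Y \<in> indeps (matroid_of_rank G \<rho>)}"
  have fin: "finite ?A" using finite_indep_subsets[OF wf_matroid_of_rank] by blast
  obtain I where I: "I \<subseteq> X" "\<rho> I = card I" "card I = \<rho> X" using basis_witness[OF assms] by blast
  have in1: "\<rho> X \<in> ?A" using I assms by (intro image_eqI[of _ _ I]) auto
  have le: "\<forall>a\<in>?A. a \<le> \<rho> X"
  proof
    fix a assume "a \<in> ?A"
    then obtain Y where Y: "Y \<subseteq> X" "Y \<subseteq> G" "\<rho> Y = card Y" "a = card Y" by auto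
    then show "a \<le> \<rho> X" using mono[of Y X] assms by simp
  qed
  show ?thesis unfolding rank_def by (rule Max_eqI[OF fin]) (use le in1 in auto)
qed

end

lemma basis_iff_card_rank: assumes w: "wf_matroid M"
  shows "basis M B \<longleftrightarrow> B \<in> indeps M \<and> card B = rank M (gnd M)"
proof
  assume b: "basis M B"
  then have iB: "B \<in> indeps M" unfolding basis_def by blast
  have BE: "B \<subseteq> gnd M" by (rule indep_subset_gnd[OF w iB])
  obtain J where J: "B \<subseteq> J" "J \<subseteq> gnd M" "J \<in> indeps M" "card J = rank M (gnd M)"
    using indep_extend_rank_witness[OF w BE iB] by blast
  have "J = B"
  proof (rule ccontr)
    assume "J \<noteq> B"
    then obtain e where e: "e \<in> J" "e \<notin> B" using J(1) by blast
    have "insert e B \<in> indeps M" by (rule wf_matroidD(4)[OF w J(3)]) (use e J(1) in blast)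
    moreover have "e \<in> gnd M - B" using e J(2) by blast
    ultimately show False using b unfolding basis_def by blast
  qed
  then show "B \<in> indeps M \<and> card B = rank M (gnd M)" using J iB by simp
next
  assume h: "B \<in> indeps M \<and> card B = rank M (gnd M)"
  have fB: "finite B" using finite_indep[OF w] h by blast
  show "basis M B" unfolding basis_def
  proof (intro conjI ballI)
    show "B \<in> indeps M" using h by blast
    fix e assume e: "e \<in> gnd M - B"
    show "insert e B \<notin> indeps M"
    proof
      assume i: "insert e B \<in> indeps M"
      have "insert e B \<subseteq> gnd M" using indep_subset_gnd[OF w i] .
      then have "card (insert e B) \<le> rank M (gnd M)" using card_le_rank[OF w _ i] by blast
      then show False using h e fB by simp
    qed
  qed
qed

definition dual_rank :: "'a matroid \<Rightarrow> 'a set \<Rightarrow> nat" where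
  "dual_rank M X = card X + rank M (gnd M - X) - rank M (gnd M)"

lemma dual_rank_eq: assumes w: "wf_matroid M" and X: "X \<subseteq> gnd M"
  shows "dual_rank M X + rank M (gnd M) = card X + rank M (gnd M - X)"
proof -
  have "finite X" using X wf_matroidD(1)[OF w] finite_subset by blast
  then have "rank M (gnd M) \<le> rank M (gnd M - X) + card X" by (rule rank_le_rank_Diff_card[OF w])
  then show ?thesis unfolding dual_rank_def by linarith
qed

lemma dual_eq_matroid_of_rank: assumes w: "wf_matroid M"
  shows "dual M = matroid_of_rank (gnd M) (dual_rank M)"
proof -
  have "(\<exists>B. basis M B \<and> X \<inter> B = {}) \<longleftrightarrow> dual_rank M X = card X" if X: "X \<subseteq> gnd M" for X
  proof
    assume "\<exists>B. basis M B \<and> X \<inter> B = {}"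
    then obtain B where B: "basis M B" "X \<inter> B = {}" by blast
    have iB: "B \<in> indeps M" "card B = rank M (gnd M)" using B(1) basis_iff_card_rank[OF w] by blast+
    have "B \<subseteq> gnd M - X" using indep_subset_gnd[OF w iB(1)] B(2) by blast
    then have "rank M (gnd M) \<le> rank M (gnd M - X)" using card_le_rank[OF w _ iB(1)] iB(2) by simp
    moreover have "rank M (gnd M - X) \<le> rank M (gnd M)" by (rule rank_mono[OF w]) blast
    ultimately show "dual_rank M X = card X" using dual_rank_eq[OF w X] by linarith
  next
    assume d: "dual_rank M X = card X"
    have "rank M (gnd M - X) \<le> rank M (gnd M)" by (rule rank_mono[OF w]) blast
    then have eq: "rank M (gnd M - X) = rank M (gnd M)" using dual_rank_eq[OF w X] d by linarith
    obtain B where B: "B \<subseteq> gnd M - X" "B \<in> indeps M" "card B = rank M (gnd M - X)"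
      using rank_witness[OF w] by blast
    have "basis M B" using basis_iff_card_rank[OF w] B eq by simp
    moreover have "X \<inter> B = {}" using B(1) by blast
    ultimately show "\<exists>B. basis M B \<and> X \<inter> B = {}" by blast
  qed
  then show ?thesis unfolding dual_def matroid_of_rank_def by auto
qed

lemma rank_function_dual_rank: assumes w: "wf_matroid M" shows "rank_function (gnd M) (dual_rank M)"
proof
  let ?E = "gnd M"
  show "finite ?E" using wf_matroidD(1)[OF w] .
  show "dual_rank M {} = 0" unfolding dual_rank_def by simp
next
  fix X e assume X: "X \<subseteq> gnd M" and e: "e \<in> gnd M"
  have a: "dual_rank M (insert e X) + rank M (gnd M) = card (insert e X) + rank M (gnd M - insert e X)"
    by (rule dual_rank_eq[OF w]) (use X e in blast)
  have b: "dual_rank M X + rank M (gnd M) = card X + rank M (gnd M - X)" by (rule dual_rank_eq[OF w X])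
  have c: "rank M (gnd M - insert e X) \<le> rank M (gnd M - X)" by (rule rank_mono[OF w]) blast
  have fX: "finite X" using X wf_matroidD(1)[OF w] finite_subset by blast
  have d: "card (insert e X) \<le> Suc (card X)" using fX by (simp add: card_insert_if)
  show "dual_rank M (insert e X) \<le> Suc (dual_rank M X)" using a b c d by linarith
next
  fix X Y assume XY: "X \<subseteq> Y" and Y: "Y \<subseteq> gnd M"
  have a: "dual_rank M Y + rank M (gnd M) = card Y + rank M (gnd M - Y)" by (rule dual_rank_eq[OF w Y])
  have b: "dual_rank M X + rank M (gnd M) = card X + rank M (gnd M - X)" by (rule dual_rank_eq[OF w]) (use XY Y in blast)
  have fY: "finite Y" using Y wf_matroidD(1)[OF w] finite_subset by blast
  have fd: "finite (Y - X)" using fY by simp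
  have "rank M (gnd M - X) \<le> rank M ((gnd M - X) - (Y - X)) + card (Y - X)" by (rule rank_le_rank_Diff_card[OF w fd])
  moreover have "(gnd M - X) - (Y - X) = gnd M - Y" using XY by blast
  moreover have "card Y = card X + card (Y - X)"
  proof -
    have fX: "finite X" using fY XY finite_subset by blast
    have "card (Y - X) = card Y - card X" by (rule card_Diff_subset[OF fX XY])
    moreover have "card X \<le> card Y" by (rule card_mono[OF fY XY])
    ultimately show ?thesis by linarith
  qed
  ultimately show "dual_rank M X \<le> dual_rank M Y" using a b by simp
next
  fix X Y assume X: "X \<subseteq> gnd M" and Y: "Y \<subseteq> gnd M"
  have a: "dual_rank M (X \<union> Y) + rank M (gnd M) = card (X \<union> Y) + rank M (gnd M - (X \<union> Y))" by (rule dual_rank_eq[OF w]) (use X Y in blast)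
  have b: "dual_rank M (X \<inter> Y) + rank M (gnd M) = card (X \<inter> Y) + rank M (gnd M - (X \<inter> Y))" by (rule dual_rank_eq[OF w]) (use X Y in blast)
  have c: "dual_rank M X + rank M (gnd M) = card X + rank M (gnd M - X)" by (rule dual_rank_eq[OF w X])
  have d: "dual_rank M Y + rank M (gnd M) = card Y + rank M (gnd M - Y)" by (rule dual_rank_eq[OF w Y])
  have fX: "finite X" using X wf_matroidD(1)[OF w] finite_subset by blast
  have fY: "finite Y" using Y wf_matroidD(1)[OF w] finite_subset by blast
  have e: "card (X \<union> Y) + card (X \<inter> Y) = card X + card Y" by (rule card_Un_Int[OF fX fY, symmetric])
  have f: "rank M ((gnd M - X) \<union> (gnd M - Y)) + rank M ((gnd M - X) \<inter> (gnd M - Y)) \<le> rank M (gnd M - X) + rank M (gnd M - Y)"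
    by (rule rank_submod[OF w])
  have g: "(gnd M - X) \<union> (gnd M - Y) = gnd M - (X \<inter> Y)" "(gnd M - X) \<inter> (gnd M - Y) = gnd M - (X \<union> Y)" by blast+
  show "dual_rank M (X \<union> Y) + dual_rank M (X \<inter> Y) \<le> dual_rank M X + dual_rank M Y" using a b c d e f g by simp
qed

lemma wf_dual: assumes w: "wf_matroid M" shows "wf_matroid (dual M)"
  using rank_function.wf_matroid_of_rank[OF rank_function_dual_rank[OF w]] dual_eq_matroid_of_rank[OF w] by simp

lemma gnd_dual[simp]: "gnd (dual M) = gnd M" unfolding dual_def by simp

lemma rank_dual: assumes w: "wf_matroid M" and X: "X \<subseteq> gnd M"
  shows "rank (dual M) X + rank M (gnd M) = card X + rank M (gnd M - X)"
  using rank_function.rank_matroid_of_rank[OF rank_function_dual_rank[OF w] X] dual_eq_matroid_of_rank[OF w] dual_rank_eq[OF w X] by simp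

lemma indep_dual_iff: assumes w: "wf_matroid M"
  shows "X \<in> indeps (dual M) \<longleftrightarrow> X \<subseteq> gnd M \<and> rank M (gnd M - X) = rank M (gnd M)"
proof -
  have "X \<in> indeps (dual M) \<longleftrightarrow> X \<subseteq> gnd M \<and> dual_rank M X = card X" 
    using dual_eq_matroid_of_rank[OF w] by simp
  moreover have "dual_rank M X = card X \<longleftrightarrow> rank M (gnd M - X) = rank M (gnd M)" if "X \<subseteq> gnd M"
    using dual_rank_eq[OF w that] rank_mono[OF w, of "gnd M - X" "gnd M"] by auto
  ultimately show ?thesis by blast
qed

definition contract_rank :: "'a matroid \<Rightarrow> 'a set \<Rightarrow> 'a set \<Rightarrow> nat" where
  "contract_rank N F X = rank N (X \<union> F) - rank N F"

lemma rank_function_contract_rank: assumes w: "wf_matroid N" shows "rank_function (gnd N - F) (contract_rank N F)"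
proof
  show "finite (gnd N - F)" using wf_matroidD(1)[OF w] by simp
  show "contract_rank N F {} = 0" unfolding contract_rank_def by simp
next
  fix X e
  have "rank N (insert e (X \<union> F)) \<le> Suc (rank N (X \<union> F))" by (rule rank_insert_le_Suc[OF w])
  moreover have "rank N F \<le> rank N (X \<union> F)" by (rule rank_mono[OF w]) blast
  ultimately show "contract_rank N F (insert e X) \<le> Suc (contract_rank N F X)" unfolding contract_rank_def by simp
next
  fix X Y :: "'a set" assume "X \<subseteq> Y"
  then have "rank N (X \<union> F) \<le> rank N (Y \<union> F)" by (intro rank_mono[OF w]) blast
  then show "contract_rank N F X \<le> contract_rank N F Y" unfolding contract_rank_def by simp
next
  fix X Y :: "'a set"
  have "rank N ((X \<union> F) \<union> (Y \<union> F)) + rank N ((X \<union> F) \<inter> (Y \<union> F)) \<le> rank N (X \<union> F) + rank N (Y \<union> F)"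
    by (rule rank_submod[OF w])
  moreover have "(X \<union> F) \<union> (Y \<union> F) = (X \<union> Y) \<union> F" "(X \<union> F) \<inter> (Y \<union> F) = (X \<inter> Y) \<union> F" by blast+
  moreover have "rank N F \<le> rank N ((X \<inter> Y) \<union> F)" "rank N F \<le> rank N ((X \<union> Y) \<union> F)"
    "rank N F \<le> rank N (X \<union> F)" "rank N F \<le> rank N (Y \<union> F)" by (rule rank_mono[OF w], blast)+
  ultimately show "contract_rank N F (X \<union> Y) + contract_rank N F (X \<inter> Y) \<le> contract_rank N F X + contract_rank N F Y" unfolding contract_rank_def by simp
qed

lemma contract_eq_matroid_of_rank: assumes w: "wf_matroid N"
  shows "contract N F = matroid_of_rank (gnd N - F) (contract_rank N F)"
proof -
  have "rank N (I \<union> F) = card I + rank N F \<longleftrightarrow> contract_rank N F I = card I" for I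
    using rank_mono[OF w, of F "I \<union> F"] unfolding contract_rank_def by auto
  then show ?thesis unfolding contract_def matroid_of_rank_def by simp
qed

lemma wf_contract: assumes w: "wf_matroid N" shows "wf_matroid (contract N F)"
  using rank_function.wf_matroid_of_rank[OF rank_function_contract_rank[OF w]] contract_eq_matroid_of_rank[OF w] by simp

lemma gnd_contract[simp]: "gnd (contract N F) = gnd N - F" unfolding contract_def by simp

lemma rank_contract: assumes w: "wf_matroid N" and X: "X \<subseteq> gnd N - F"
  shows "rank (contract N F) X + rank N F = rank N (X \<union> F)"
proof -
  have "rank (contract N F) X = contract_rank N F X" using rank_function.rank_matroid_of_rank[OF rank_function_contract_rank[OF w] X] contract_eq_matroid_of_rank[OF w] by simp
  moreover have "rank N F \<le> rank N (X \<union> F)" by (rule rank_mono[OF w]) blast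
  ultimately show ?thesis unfolding contract_rank_def by simp
qed

definition restriction :: "'a matroid \<Rightarrow> 'a set \<Rightarrow> 'a matroid" where
  "restriction N Z = Matroid Z {I \<in> indeps N. I \<subseteq> Z}"

lemma wf_restriction: assumes w: "wf_matroid N" and Z: "Z \<subseteq> gnd N" shows "wf_matroid (restriction N Z)"
  unfolding wf_matroid_def restriction_def matroid.sel
proof (intro conjI allI impI)
  show "finite Z" using Z wf_matroidD(1)[OF w] finite_subset by blast
  show "{} \<in> {I \<in> indeps N. I \<subseteq> Z}" using wf_matroidD(3)[OF w] by simp
  show "{I \<in> indeps N. I \<subseteq> Z} \<subseteq> Pow Z" by auto
next
  fix X Y assume h: "X \<in> {I \<in> indeps N. I \<subseteq> Z} \<and> Y \<subseteq> X"
  then have "X \<in> indeps N" "Y \<subseteq> X" "X \<subseteq> Z" by auto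
  then show "Y \<in> {I \<in> indeps N. I \<subseteq> Z}" using wf_matroidD(4)[OF w] by auto
next
  fix X Y assume h: "X \<in> {I \<in> indeps N. I \<subseteq> Z} \<and> Y \<in> {I \<in> indeps N. I \<subseteq> Z} \<and> card X < card Y"
  then have X: "X \<in> indeps N" "X \<subseteq> Z" and Y: "Y \<in> indeps N" "Y \<subseteq> Z" and lt: "card X < card Y" by auto
  obtain e where "e \<in> Y - X" "insert e X \<in> indeps N" using wf_matroidD(5)[OF w X(1) Y(1) lt] by blast
  then show "\<exists>e\<in>Y - X. insert e X \<in> {I \<in> indeps N. I \<subseteq> Z}" using X Y by auto
qed

lemma gnd_restriction[simp]: "gnd (restriction N Z) = Z" unfolding restriction_def by simp
lemma indeps_restriction: "indeps (restriction N Z) = {I \<in> indeps N. I \<subseteq> Z}" unfolding restriction_def by simp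

lemma rank_restriction: assumes "X \<subseteq> Z" shows "rank (restriction N Z) X = rank N X"
proof -
  have "{Y. Y \<subseteq> X \<and> Y \<in> indeps (restriction N Z)} = {Y. Y \<subseteq> X \<and> Y \<in> indeps N}"
    using assms unfolding indeps_restriction by blast
  then show ?thesis unfolding rank_def by simp
qed

lemma circuit_restriction_iff: assumes w: "wf_matroid N" and Z: "Z \<subseteq> gnd N" and C: "C \<subseteq> Z"
  shows "circuit (restriction N Z) C \<longleftrightarrow> circuit N C"
  unfolding circuit_def indeps_restriction using C Z by auto

lemma delete_eq_restriction: assumes w: "wf_matroid N" shows "delete N e = restriction N (gnd N - {e})"
  unfolding delete_def restriction_def using indep_subset_gnd[OF w] by auto

lemma series_minor_trans: "series_minor N M' \<Longrightarrow> series_minor M' M \<Longrightarrow> series_minor N M"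
  by (induction N M' rule: series_minor.induct) (auto intro: series_minor.intros)

lemma series_minor_restriction: assumes w: "wf_matroid N" and Z: "Z \<subseteq> gnd N"
  shows "series_minor (restriction N Z) N"
proof -
  have gen: "finite S \<Longrightarrow> S \<subseteq> gnd N \<Longrightarrow> series_minor (Matroid (gnd N - S) {I \<in> indeps N. I \<inter> S = {}}) N" for S
  proof (induction S rule: finite_induct)
    case empty
    have "Matroid (gnd N - {}) {I \<in> indeps N. I \<inter> {} = {}} = N" by (cases N) simp
    then show ?case using series_minor.refl by metis
  next
    case (insert e S)
    then have IH: "series_minor (Matroid (gnd N - S) {I \<in> indeps N. I \<inter> S = {}}) N" by auto
    have e: "e \<in> gnd (Matroid (gnd N - S) {I \<in> indeps N. I \<inter> S = {}})" using insert by auto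
    have "delete (Matroid (gnd N - S) {I \<in> indeps N. I \<inter> S = {}}) e
       = Matroid (gnd N - insert e S) {I \<in> indeps N. I \<inter> insert e S = {}}"
      unfolding delete_def by auto
    then show ?case using series_minor.del[OF IH e] by simp
  qed
  have fin: "finite (gnd N - Z)" using wf_matroidD(1)[OF w] by simp
  have "Matroid (gnd N - (gnd N - Z)) {I \<in> indeps N. I \<inter> (gnd N - Z) = {}} = restriction N Z"
    unfolding restriction_def using Z indep_subset_gnd[OF w] by auto
  then show ?thesis using gen[OF fin] by auto
qed

section \<open>Connectivity and unbreakability\<close>

definition inseparable :: "'a matroid \<Rightarrow> 'a set \<Rightarrow> bool" where
  "inseparable M G \<longleftrightarrow> (\<forall>A. A \<subseteq> G \<longrightarrow> skew M A (G - A) \<longrightarrow> A = {} \<or> A = G)"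

definition cyclic_set :: "'a matroid \<Rightarrow> 'a set \<Rightarrow> bool" where
  "cyclic_set M G \<longleftrightarrow> (\<forall>e\<in>G. rank M (G - {e}) = rank M G)"

lemma inseparable_if_connected:
  assumes w: "wf_matroid N" and conn: "connected_matroid N"
  shows "inseparable N (gnd N)"
  unfolding inseparable_def
proof (intro allI impI)
  fix A assume A: "A \<subseteq> gnd N" and sk: "skew N A (gnd N - A)"
  show "A = {} \<or> A = gnd N"
  proof (rule ccontr)
    assume "\<not> (A = {} \<or> A = gnd N)"
    then obtain x y where x: "x \<in> A" and y: "y \<in> gnd N" "y \<notin> A" using A by blast
    moreover have "x \<noteq> y" "x \<in> gnd N" using x y A by blast+
    ultimately obtain C where C: "circuit N C" "x \<in> C" "y \<in> C" using conn unfolding connected_matroid_def by blast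
    have "C \<subseteq> A \<union> (gnd N - A)" using circuitD(1)[OF w C(1)] by blast
    then have "C \<subseteq> A \<or> C \<subseteq> gnd N - A" using circuit_inside_skew_side[OF w _ sk C(1)] by blast
    then show False using C x y by blast
  qed
qed

lemma connected_if_inseparable:
  assumes w: "wf_matroid N" and ins: "inseparable N (gnd N)"
  shows "connected_matroid N"
  unfolding connected_matroid_def
proof (intro ballI impI)
  fix x y assume x: "x \<in> gnd N" and y: "y \<in> gnd N" and xy: "x \<noteq> y"
  show "\<exists>C. circuit N C \<and> x \<in> C \<and> y \<in> C"
  proof (rule ccontr)
    assume no_circuit: "\<not> ?thesis"
    define K where "K = insert x (circuit_component N (gnd N) x)"
    have closed: "C \<subseteq> K" if C: "circuit N C" "C \<subseteq> gnd N" "C \<inter> K \<noteq> {}" for C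
    proof (cases "x \<in> C")
      case True
      then show ?thesis using C unfolding K_def circuit_component_def by blast
    next
      case False
      then show ?thesis using circuit_component_closed[OF w C(1,2), of x] C(3) unfolding K_def by blast
    qed
    have KE: "K \<subseteq> gnd N" unfolding K_def circuit_component_def using x by blast
    have "skew N K (gnd N - K)" by (rule skew_if_circuit_closed[OF w closed]) (use KE in blast)+
    then have "K = {} \<or> K = gnd N" using ins KE unfolding inseparable_def by blast
    moreover have "y \<notin> K" unfolding K_def circuit_component_def using no_circuit xy by blast
    ultimately show False using y unfolding K_def by blast
  qed
qed

lemma connected_iff_inseparable:
  assumes "wf_matroid N"
  shows "connected_matroid N \<longleftrightarrow> inseparable N (gnd N)"
  using inseparable_if_connected connected_if_inseparable assms by blast

lemma cyclic_set_circuit: assumes w: "wf_matroid M" and G: "G \<subseteq> gnd M" and c: "cyclic_set M G" and a: "a \<in> G"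
  obtains C where "circuit M C" "a \<in> C" "C \<subseteq> G"
proof -
  have "rank M (insert a (G - {a})) = rank M (G - {a})" using c a unfolding cyclic_set_def by (simp add: insert_absorb)
  then obtain C where "circuit M C" "a \<in> C" "C \<subseteq> insert a (G - {a})"
    using circuit_through_spanned[OF w, of "G - {a}" a] G a by blast
  then show ?thesis using that a by blast
qed

lemma cyclic_set_Un_circuits:
  assumes w: "wf_matroid M" and c1: "circuit M C1" and c2: "circuit M C2"
  shows "cyclic_set M (C1 \<union> C2)"
  unfolding cyclic_set_def
proof
  fix e assume e: "e \<in> C1 \<union> C2"
  have "rank M (insert e (C1 \<union> C2 - {e})) = rank M (C1 \<union> C2 - {e})"
  proof (cases "e \<in> C1")
    case True
    show ?thesis by (rule circuit_element_spanned[OF w c1 True]) blast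
  next
    case False
    then have "e \<in> C2" using e by blast
    show ?thesis by (rule circuit_element_spanned[OF w c2 \<open>e \<in> C2\<close>]) blast
  qed
  then show "rank M (C1 \<union> C2 - {e}) = rank M (C1 \<union> C2)" using e by (simp add: insert_absorb)
qed

lemma no_skew_circuits_iff_cyclic_inseparable: assumes w: "wf_matroid M"
  shows "\<not> has_skew_circuits M \<longleftrightarrow> (\<forall>G. G \<subseteq> gnd M \<longrightarrow> cyclic_set M G \<longrightarrow> inseparable M G)"
proof
  assume ns: "\<not> has_skew_circuits M"
  show "\<forall>G. G \<subseteq> gnd M \<longrightarrow> cyclic_set M G \<longrightarrow> inseparable M G"
    unfolding inseparable_def
  proof (intro allI impI)
    fix G A assume G: "G \<subseteq> gnd M" and c: "cyclic_set M G" and A: "A \<subseteq> G" and sk: "skew M A (G - A)"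
    show "A = {} \<or> A = G"
    proof (rule ccontr)
      assume "\<not> (A = {} \<or> A = G)"
      then obtain a b where a: "a \<in> A" and b: "b \<in> G" "b \<notin> A" using A by blast
      have d: "A \<inter> (G - A) = {}" by blast
      obtain Ca where Ca: "circuit M Ca" "a \<in> Ca" "Ca \<subseteq> G" using cyclic_set_circuit[OF w G c] a A by blast
      obtain Cb where Cb: "circuit M Cb" "b \<in> Cb" "Cb \<subseteq> G" using cyclic_set_circuit[OF w G c] b by blast
      have CaA: "Ca \<subseteq> A" using circuit_inside_skew_side[OF w d sk Ca(1)] Ca a by blast
      have CbA: "Cb \<subseteq> G - A" using circuit_inside_skew_side[OF w d sk Cb(1)] Cb b by blast
      have "skew M Ca Cb" by (rule skew_subsets[OF w d sk CaA CbA])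
      moreover have "Ca \<noteq> Cb" using CbA Ca(2) a by blast
      ultimately show False using ns Ca(1) Cb(1) unfolding has_skew_circuits_def by blast
    qed
  qed
next
  assume h: "\<forall>G. G \<subseteq> gnd M \<longrightarrow> cyclic_set M G \<longrightarrow> inseparable M G"
  show "\<not> has_skew_circuits M"
  proof
    assume "has_skew_circuits M"
    then obtain C1 C2 where c1: "circuit M C1" and c2: "circuit M C2" and ne: "C1 \<noteq> C2" and sk: "skew M C1 C2"
      unfolding has_skew_circuits_def by blast
    have disj: "C1 \<inter> C2 = {}" by (rule skew_circuits_disjoint[OF w c1 c2 ne sk])
    have "C1 \<union> C2 \<subseteq> gnd M" using circuitD(1)[OF w c1] circuitD(1)[OF w c2] by blast
    then have "inseparable M (C1 \<union> C2)" using h[rule_format, OF _ cyclic_set_Un_circuits[OF w c1 c2]] by simp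
    moreover have "C1 \<union> C2 - C1 = C2" using disj by blast
    then have "skew M C1 (C1 \<union> C2 - C1)" using sk by simp
    ultimately have "C1 = {} \<or> C1 = C1 \<union> C2"
      unfolding inseparable_def using Un_upper1[of C1 C2] by simp
    then show False using circuitD(4)[OF w c1] circuitD(4)[OF w c2] disj by blast
  qed
qed

lemma flat_dual_iff: assumes w: "wf_matroid M"
  shows "flat (dual M) F \<longleftrightarrow> F \<subseteq> gnd M \<and> cyclic_set M (gnd M - F)"
proof -
  have key: "rank (dual M) F < rank (dual M) (insert e F) \<longleftrightarrow> rank M ((gnd M - F) - {e}) = rank M (gnd M - F)"
    if F: "F \<subseteq> gnd M" and e: "e \<in> gnd M - F" for e
  proof -
    have a: "rank (dual M) (insert e F) + rank M (gnd M) = card (insert e F) + rank M (gnd M - insert e F)"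
      by (rule rank_dual[OF w]) (use F e in blast)
    have b: "rank (dual M) F + rank M (gnd M) = card F + rank M (gnd M - F)" by (rule rank_dual[OF w F])
    have fF: "finite F" using F wf_matroidD(1)[OF w] finite_subset by blast
    have c: "card (insert e F) = Suc (card F)" using e fF by simp
    have d: "gnd M - insert e F = (gnd M - F) - {e}" by blast
    have m: "rank M ((gnd M - F) - {e}) \<le> rank M (gnd M - F)" by (rule rank_mono[OF w]) blast
    have u: "rank M (gnd M - F) \<le> Suc (rank M ((gnd M - F) - {e}))"
      using rank_insert_le_Suc[OF w, of e "(gnd M - F) - {e}"] e by (simp add: insert_absorb)
    have a': "rank (dual M) (insert e F) + rank M (gnd M) = Suc (card F) + rank M ((gnd M - F) - {e})"
      using a c d by simp
    show ?thesis using a' b m u by (intro iffI) linarith+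
  qed
  then show ?thesis unfolding flat_def cyclic_set_def gnd_dual by blast
qed

lemma contract_empty: assumes w: "wf_matroid N" shows "contract N {} = N"
proof -
  have "{I. I \<subseteq> gnd N \<and> rank N I = card I} = indeps N"
    using indep_iff_rank[OF w] indep_subset_gnd[OF w] by blast
  then show ?thesis unfolding contract_def using rank_empty[OF w] by (simp add: matroid.expand)
qed

lemma skew_contract_dual_iff:
  assumes w: "wf_matroid M" and F: "F \<subseteq> gnd M" and A: "A \<subseteq> gnd M - F"
  shows "skew (contract (dual M) F) A (gnd M - F - A) \<longleftrightarrow> skew M A (gnd M - F - A)"
proof -
  define G where "G = gnd M - F"
  have fE: "finite (gnd M)" using wf_matroidD(1)[OF w] .
  have rc: "rank (contract (dual M) F) X + rank (dual M) F + rank M (gnd M) = card X + card F + rank M (G - X)"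
    if X: "X \<subseteq> G" for X
  proof -
    have a: "rank (contract (dual M) F) X + rank (dual M) F = rank (dual M) (X \<union> F)"
      by (rule rank_contract[OF wf_dual[OF w]]) (use X in \<open>simp add: G_def\<close>)
    have b: "rank (dual M) (X \<union> F) + rank M (gnd M) = card (X \<union> F) + rank M (gnd M - (X \<union> F))"
      by (rule rank_dual[OF w]) (use X F in \<open>auto simp: G_def\<close>)
    have "card (X \<union> F) = card X + card F"
      using X F fE by (intro card_Un_disjoint) (auto simp: G_def intro: finite_subset)
    moreover have "gnd M - (X \<union> F) = G - X" unfolding G_def by blast
    ultimately show ?thesis using a b by simp
  qed
  have fG: "finite G" unfolding G_def using fE by simp
  have AG: "A \<subseteq> G" using A unfolding G_def .
  have "card (G - A) + card A = card G"
    using card_Diff_subset[OF finite_subset[OF AG fG] AG] card_mono[OF fG AG] by linarith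
  moreover have "rank (contract (dual M) F) (G - A) + rank (dual M) F + rank M (gnd M) = card (G - A) + card F + rank M A"
    using rc[of "G - A"] Diff_Diff_Int[of G A] Int_absorb1[OF AG] by simp
  moreover have "rank (contract (dual M) F) G + rank (dual M) F + rank M (gnd M) = card G + card F"
    using rc[of G] rank_empty[OF w] by simp
  moreover have "rank (dual M) F + rank M (gnd M) = card F + rank M G"
    using rank_dual[OF w F] unfolding G_def .
  moreover have U: "A \<union> (G - A) = G" using AG by blast
  ultimately show ?thesis
    using rc[OF AG] unfolding skew_def G_def[symmetric] U by (intro iffI) linarith+
qed

lemma connected_contract_dual_iff: assumes w: "wf_matroid M" and F: "F \<subseteq> gnd M"
  shows "connected_matroid (contract (dual M) F) \<longleftrightarrow> inseparable M (gnd M - F)"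
  using connected_iff_inseparable[OF wf_contract[OF wf_dual[OF w]]] skew_contract_dual_iff[OF w F]
  unfolding inseparable_def by simp

lemma connected_dual_iff: assumes w: "wf_matroid M"
  shows "connected_matroid (dual M) \<longleftrightarrow> connected_matroid M"
  using connected_contract_dual_iff[OF w, of "{}"] contract_empty[OF wf_dual[OF w]] connected_iff_inseparable[OF w]
  by simp

lemma unbreakable_dual_iff: assumes w: "wf_matroid M" and conn: "connected_matroid M"
  shows "unbreakable (dual M) \<longleftrightarrow> (\<forall>G. G \<subseteq> gnd M \<longrightarrow> cyclic_set M G \<longrightarrow> inseparable M G)"
proof
  assume u: "unbreakable (dual M)"
  show "\<forall>G. G \<subseteq> gnd M \<longrightarrow> cyclic_set M G \<longrightarrow> inseparable M G"
  proof (intro allI impI)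
    fix G assume G: "G \<subseteq> gnd M" and c: "cyclic_set M G"
    have GF: "gnd M - (gnd M - G) = G" using G by blast
    have "flat (dual M) (gnd M - G)" using flat_dual_iff[OF w] c GF by simp
    then have "connected_matroid (contract (dual M) (gnd M - G))" using u unfolding unbreakable_def by blast
    then show "inseparable M G" using connected_contract_dual_iff[OF w, of "gnd M - G"] GF by simp
  qed
next
  assume h: "\<forall>G. G \<subseteq> gnd M \<longrightarrow> cyclic_set M G \<longrightarrow> inseparable M G"
  show "unbreakable (dual M)" unfolding unbreakable_def
  proof (intro conjI allI impI)
    show "connected_matroid (dual M)" using connected_dual_iff[OF w] conn by simp
    fix F assume "flat (dual M) F"
    then have F: "F \<subseteq> gnd M" and "cyclic_set M (gnd M - F)" using flat_dual_iff[OF w] by blast+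
    then have "inseparable M (gnd M - F)" using h by blast
    then show "connected_matroid (contract (dual M) F)" using connected_contract_dual_iff[OF w F] by simp
  qed
qed

lemma no_skew_circuits_iff_unbreakable_dual:
  assumes "wf_matroid M" and "connected_matroid M"
  shows "\<not> has_skew_circuits M \<longleftrightarrow> unbreakable (dual M)"
  using no_skew_circuits_iff_cyclic_inseparable[OF assms(1)] unbreakable_dual_iff[OF assms] by simp

section \<open>Series contraction\<close>

lemma series_pairD: assumes w: "wf_matroid N" and c: "cocircuit N {f, g}"
  shows "f \<in> gnd N" "g \<in> gnd N" "rank N (gnd N - {f, g}) \<noteq> rank N (gnd N)"
    "f \<noteq> g \<Longrightarrow> rank N (gnd N - {f}) = rank N (gnd N)"
    "f \<noteq> g \<Longrightarrow> rank N (gnd N - {g}) = rank N (gnd N)"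
proof -
  have c': "circuit (dual N) {f, g}" using c unfolding cocircuit_def .
  show "f \<in> gnd N" "g \<in> gnd N" using circuitD(1)[OF wf_dual[OF w] c'] by auto
  have "{f, g} \<notin> indeps (dual N)" using circuitD(2)[OF wf_dual[OF w] c'] .
  then show "rank N (gnd N - {f, g}) \<noteq> rank N (gnd N)"
    using indep_dual_iff[OF w] \<open>f \<in> gnd N\<close> \<open>g \<in> gnd N\<close> by blast
  assume fg: "f \<noteq> g"
  have "{f, g} - {g} \<in> indeps (dual N)" by (rule circuitD(5)[OF wf_dual[OF w] c']) simp
  moreover have "{f, g} - {g} = {f}" using fg by blast
  ultimately show "rank N (gnd N - {f}) = rank N (gnd N)" using indep_dual_iff[OF w] by simp
  have "{f, g} - {f} \<in> indeps (dual N)" by (rule circuitD(5)[OF wf_dual[OF w] c']) simp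
  moreover have "{f, g} - {f} = {g}" using fg by blast
  ultimately show "rank N (gnd N - {g}) = rank N (gnd N)" using indep_dual_iff[OF w] by simp
qed

lemma series_pairI: assumes w: "wf_matroid N" and fg: "f \<in> gnd N" "g \<in> gnd N" "f \<noteq> g"
  and r: "rank N (gnd N - {f, g}) \<noteq> rank N (gnd N)"
  and rf: "rank N (gnd N - {f}) = rank N (gnd N)" and rg: "rank N (gnd N - {g}) = rank N (gnd N)"
  shows "cocircuit N {f, g}"
  unfolding cocircuit_def
proof (rule circuitI[OF wf_dual[OF w]])
  show "{f, g} \<subseteq> gnd (dual N)" using fg by simp
  show "{f, g} \<notin> indeps (dual N)" using indep_dual_iff[OF w] r by blast
  show "\<forall>x\<in>{f, g}. {f, g} - {x} \<in> indeps (dual N)"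
  proof
    fix x assume "x \<in> {f, g}"
    then have "({f, g} - {x} = {g} \<and> x = f) \<or> ({f, g} - {x} = {f} \<and> x = g)" using fg(3) by blast
    then show "{f, g} - {x} \<in> indeps (dual N)" using indep_dual_iff[OF w] fg rf rg by auto
  qed
qed

lemma series_pair_spans: assumes w: "wf_matroid N" and c: "cocircuit N {f, g}"
  and X: "X \<subseteq> gnd N - {f}" and r: "rank N (insert f X) = rank N X"
  shows "g \<in> X \<and> g \<noteq> f"
proof (rule ccontr)
  assume n: "\<not> (g \<in> X \<and> g \<noteq> f)"
  then have X2: "X \<subseteq> gnd N - {f, g}" using X by blast
  have a: "rank N (insert f (gnd N - {f, g})) = rank N (gnd N - {f, g})" by (rule spans_mono[OF w r X2])
  show False
  proof (cases "f = g")
    case True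
    have "insert f (gnd N - {f, g}) = gnd N" using series_pairD(1)[OF w c] True by blast
    then show False using a series_pairD(3)[OF w c] by simp
  next
    case False
    have "insert f (gnd N - {f, g}) = gnd N - {g}" using series_pairD(1)[OF w c] False by blast
    then show False using a series_pairD(3)[OF w c] series_pairD(5)[OF w c False] by simp
  qed
qed

lemma rank_series_element: assumes w: "wf_matroid N" and c: "cocircuit N {f, g}"
  shows "rank N {f} = 1"
proof -
  have "rank N {f} \<le> Suc (rank N {})" using rank_insert_le_Suc[OF w, of f "{}"] by simp
  moreover have "rank N {f} \<noteq> 0"
  proof
    assume "rank N {f} = 0"
    then have "rank N (insert f {}) = rank N {}" using rank_empty[OF w] by simp
    then show False using series_pair_spans[OF w c, of "{}"] by simp
  qed
  ultimately show ?thesis using rank_empty[OF w] by simp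
qed

lemma rank_series_contract: assumes w: "wf_matroid N" and c: "cocircuit N {f, g}" and X: "X \<subseteq> gnd N - {f}"
  shows "rank (contract N {f}) X + 1 = rank N (insert f X)"
  using rank_contract[OF w, of X "{f}"] X rank_series_element[OF w c] by simp

lemma rank_insert_series_element: assumes w: "wf_matroid N" and c: "cocircuit N {f, g}"
  and X: "X \<subseteq> gnd N - {f}" and g: "g \<notin> X"
  shows "rank N (insert f X) = Suc (rank N X)"
proof -
  have "rank N (insert f X) \<noteq> rank N X" using series_pair_spans[OF w c X] g by blast
  moreover have "rank N X \<le> rank N (insert f X)" by (rule rank_mono[OF w]) blast
  moreover have "rank N (insert f X) \<le> Suc (rank N X)" by (rule rank_insert_le_Suc[OF w])
  ultimately show ?thesis by linarith
qed

lemma circuit_series_contract_avoiding: assumes w: "wf_matroid N" and c: "cocircuit N {f, g}" and C: "circuit N C"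
  and f: "f \<notin> C" and g: "g \<notin> C"
  shows "circuit (contract N {f}) C"
proof -
  have CE: "C \<subseteq> gnd N" using circuitD(1)[OF w C] .
  have eq: "rank (contract N {f}) Y = rank N Y" if Y: "Y \<subseteq> C" for Y
  proof -
    have Y': "Y \<subseteq> gnd N - {f}" using Y CE f by blast
    have "rank (contract N {f}) Y + 1 = rank N (insert f Y)" by (rule rank_series_contract[OF w c Y'])
    moreover have "rank N (insert f Y) = Suc (rank N Y)" by (rule rank_insert_series_element[OF w c Y']) (use Y g in blast)
    ultimately show ?thesis by simp
  qed
  have wc: "wf_matroid (contract N {f})" by (rule wf_contract[OF w])
  have CE': "C \<subseteq> gnd (contract N {f})" using CE f by auto
  show ?thesis
  proof (rule circuitI[OF wc CE'])
    have "0 < card C" using circuitD(3,4)[OF w C] card_gt_0_iff by blast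
    then have "rank N C \<noteq> card C" using circuitD(6)[OF w C] by linarith
    then show "C \<notin> indeps (contract N {f})" using indep_iff_rank[OF wc CE'] eq[of C] by simp
    show "\<forall>x\<in>C. C - {x} \<in> indeps (contract N {f})"
    proof
      fix x assume x: "x \<in> C"
      have i: "C - {x} \<in> indeps N" using circuitD(5)[OF w C x] .
      have s: "C - {x} \<subseteq> gnd (contract N {f})" using CE' by blast
      show "C - {x} \<in> indeps (contract N {f})"
        using indep_iff_rank[OF wc s] eq[of "C - {x}"] rank_indep_eq_card[OF w i] by simp
    qed
  qed
qed

lemma circuit_series_contract_shrink: assumes w: "wf_matroid N" and c: "cocircuit N {f, g}" and C: "circuit N C"
  and f: "f \<in> C" and two: "card C \<ge> 3"
  shows "circuit (contract N {f}) (C - {f})"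
proof -
  have CE: "C \<subseteq> gnd N" using circuitD(1)[OF w C] .
  have fC: "finite C" using circuitD(3)[OF w C] .
  have wc: "wf_matroid (contract N {f})" by (rule wf_contract[OF w])
  have CE': "C - {f} \<subseteq> gnd (contract N {f})" using CE by auto
  have cd: "card (C - {f}) = card C - 1" using f fC by simp
  show ?thesis
  proof (rule circuitI[OF wc CE'])
    have "rank (contract N {f}) (C - {f}) + 1 = rank N (insert f (C - {f}))" by (rule rank_series_contract[OF w c]) (use CE in blast)
    moreover have "insert f (C - {f}) = C" using f by blast
    ultimately have "rank (contract N {f}) (C - {f}) + 1 = card C - 1" using circuitD(6)[OF w C] by simp
    then have "rank (contract N {f}) (C - {f}) \<noteq> card (C - {f})" using cd two by linarith
    then show "C - {f} \<notin> indeps (contract N {f})" using indep_iff_rank[OF wc CE'] by simp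
    show "\<forall>x\<in>C - {f}. C - {f} - {x} \<in> indeps (contract N {f})"
    proof
      fix x assume x: "x \<in> C - {f}"
      have s: "C - {f} - {x} \<subseteq> gnd (contract N {f})" using CE' by blast
      have "rank (contract N {f}) (C - {f} - {x}) + 1 = rank N (insert f (C - {f} - {x}))" by (rule rank_series_contract[OF w c]) (use CE in blast)
      moreover have "insert f (C - {f} - {x}) = C - {x}" using f x by blast
      moreover have "rank N (C - {x}) = card C - 1"
        using rank_indep_eq_card[OF w circuitD(5)[OF w C]] x fC by simp
      moreover have "card (C - {f} - {x}) = card C - 2" using x f fC by (simp add: card_Diff_subset)
      ultimately have "rank (contract N {f}) (C - {f} - {x}) = card (C - {f} - {x})" using two by simp
      then show "C - {f} - {x} \<in> indeps (contract N {f})" using indep_iff_rank[OF wc s] by simp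
    qed
  qed
qed

lemma circuit_series_contract_lift_nonspanning:
  assumes w: "wf_matroid N" and c: "cocircuit N {f, g}" and C: "circuit (contract N {f}) C"
    and nsp: "rank N (insert f C) \<noteq> rank N C"
  shows "circuit N C"
proof -
  have wc: "wf_matroid (contract N {f})" by (rule wf_contract[OF w])
  have CE: "C \<subseteq> gnd N - {f}" using circuitD(1)[OF wc C] by simp
  \<comment> \<open>f is spanned by no subset of C, so contracting f does not change ranks inside C\<close>
  have eq: "rank N Y = rank (contract N {f}) Y" if Y: "Y \<subseteq> C" for Y
  proof -
    have "rank N (insert f Y) \<noteq> rank N Y" using spans_mono[OF w _ Y] nsp by blast
    then have "rank N (insert f Y) = Suc (rank N Y)"
      using rank_mono[OF w subset_insertI[of Y f]] rank_insert_le_Suc[OF w, of f Y] by linarith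
    then show ?thesis using rank_series_contract[OF w c, of Y] Y CE by simp
  qed
  have fC: "finite C" using circuitD(3)[OF wc C] .
  have ne: "card C \<ge> 1" using circuitD(3,4)[OF wc C] by (simp add: Suc_leI card_gt_0_iff)
  show ?thesis
  proof (rule circuitI[OF w])
    show "C \<subseteq> gnd N" using CE by blast
    then show "C \<notin> indeps N" using indep_iff_rank[OF w] eq[of C] circuitD(6)[OF wc C] ne by simp
    show "\<forall>x\<in>C. C - {x} \<in> indeps N"
    proof
      fix x assume x: "x \<in> C"
      have "rank N (C - {x}) = card (C - {x})" using eq[of "C - {x}"] circuitD(6)[OF wc C] circuitD(7)[OF wc C x] x fC by simp
      then show "C - {x} \<in> indeps N" using indep_iff_rank[OF w, of "C - {x}"] CE by blast
    qed
  qed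
qed

lemma circuit_series_contract_lift_spanning:
  assumes w: "wf_matroid N" and c: "cocircuit N {f, g}" and C: "circuit (contract N {f}) C"
    and sp: "rank N (insert f C) = rank N C"
  shows "circuit N (insert f C)"
proof -
  have wc: "wf_matroid (contract N {f})" by (rule wf_contract[OF w])
  have CE: "C \<subseteq> gnd N - {f}" using circuitD(1)[OF wc C] by simp
  have fC: "finite C" using circuitD(3)[OF wc C] .
  have fn: "f \<notin> C" using CE by blast
  have ne: "card C \<ge> 1" using circuitD(3,4)[OF wc C] by (simp add: Suc_leI card_gt_0_iff)
  have rc: "rank N (insert f Y) = rank (contract N {f}) Y + 1" if "Y \<subseteq> C" for Y
    using rank_series_contract[OF w c, of Y] that CE by simp
  have IE: "insert f C \<subseteq> gnd N" using CE series_pairD(1)[OF w c] by blast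
  have rC: "rank N (insert f C) = card C" using rc[of C] circuitD(6)[OF wc C] ne by simp
  show ?thesis
  proof (rule circuitI[OF w IE])
    show "insert f C \<notin> indeps N" using indep_iff_rank[OF w IE] rC fn fC by simp
    show "\<forall>x\<in>insert f C. insert f C - {x} \<in> indeps N"
    proof
      fix x assume x: "x \<in> insert f C"
      show "insert f C - {x} \<in> indeps N"
      proof (cases "x = f")
        case True
        then have "insert f C - {x} = C" using CE by blast
        moreover have "rank N C = card C" using rC sp by simp
        ultimately show ?thesis using indep_iff_rank[OF w] CE by auto
      next
        case False
        then have xC: "x \<in> C" and e: "insert f C - {x} = insert f (C - {x})" using x by blast+
        have "rank N (insert f (C - {x})) = card C"
          using rc[of "C - {x}"] circuitD(6)[OF wc C] circuitD(7)[OF wc C xC] ne by simp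
        moreover have "card (insert f (C - {x})) = card C" using fn xC fC ne by simp
        moreover have "insert f (C - {x}) \<subseteq> gnd N" using IE by blast
        ultimately show ?thesis using indep_iff_rank[OF w] e by metis
      qed
    qed
  qed
qed

lemma no_skew_circuits_series_contract:
  assumes w: "wf_matroid N" and c: "cocircuit N {f, g}" and ns: "\<not> has_skew_circuits N"
  shows "\<not> has_skew_circuits (contract N {f})"
proof
  assume "has_skew_circuits (contract N {f})"
  then obtain C1 C2 where c1: "circuit (contract N {f}) C1" and c2: "circuit (contract N {f}) C2"
    and ne: "C1 \<noteq> C2" and sk: "skew (contract N {f}) C1 C2" unfolding has_skew_circuits_def by blast
  have wc: "wf_matroid (contract N {f})" by (rule wf_contract[OF w])
  have disj: "C1 \<inter> C2 = {}" by (rule skew_circuits_disjoint[OF wc c1 c2 ne sk])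
  have E1: "C1 \<subseteq> gnd N - {f}" and E2: "C2 \<subseteq> gnd N - {f}" using circuitD(1)[OF wc c1] circuitD(1)[OF wc c2] by simp_all
  have ra: "rank (contract N {f}) C1 + 1 = rank N (insert f C1)" by (rule rank_series_contract[OF w c E1])
  have rb: "rank (contract N {f}) C2 + 1 = rank N (insert f C2)" by (rule rank_series_contract[OF w c E2])
  have rab: "rank (contract N {f}) (C1 \<union> C2) + 1 = rank N (insert f (C1 \<union> C2))"
    by (rule rank_series_contract[OF w c]) (use E1 E2 in blast)
  have skr: "rank (contract N {f}) C1 + rank (contract N {f}) C2 = rank (contract N {f}) (C1 \<union> C2)"
    using sk unfolding skew_def .
  have skew_in_N: False if "circuit N D1" "circuit N D2" "D1 \<noteq> D2" "rank N D1 + rank N D2 = rank N (D1 \<union> D2)" for D1 D2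
    using ns that unfolding has_skew_circuits_def skew_def by blast
  have spans: "rank N (insert f C) \<noteq> rank N C \<Longrightarrow> rank N (insert f C) = Suc (rank N C)" for C
    using rank_mono[OF w subset_insertI[of C f]] rank_insert_le_Suc[OF w, of f C] by linarith
  have f1: "f \<notin> C1" "f \<notin> C2" using E1 E2 by blast+
  \<comment> \<open>f cannot be spanned by both, since then g would lie in both\<close>
  have "\<not> (rank N (insert f C1) = rank N C1 \<and> rank N (insert f C2) = rank N C2)"
    using series_pair_spans[OF w c E1] series_pair_spans[OF w c E2] disj by blast
  then consider
      (neither) "rank N (insert f C1) \<noteq> rank N C1" "rank N (insert f C2) \<noteq> rank N C2"
    | (first) "rank N (insert f C1) = rank N C1" "rank N (insert f C2) \<noteq> rank N C2"
    | (second) "rank N (insert f C1) \<noteq> rank N C1" "rank N (insert f C2) = rank N C2"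
    by blast
  then show False
  proof cases
    case neither
    have "rank N (C1 \<union> C2) \<le> rank N C1 + rank N C2" by (rule rank_Un_le[OF w])
    moreover have "rank N (insert f (C1 \<union> C2)) \<le> Suc (rank N (C1 \<union> C2))" by (rule rank_insert_le_Suc[OF w])
    ultimately have "rank N C1 + rank N C2 = rank N (C1 \<union> C2)"
      using spans[OF neither(1)] spans[OF neither(2)] ra rb rab skr by linarith
    then show False using skew_in_N circuit_series_contract_lift_nonspanning[OF w c] c1 c2 neither ne by blast
  next
    case first
    have "insert f C1 \<union> C2 = insert f (C1 \<union> C2)" by blast
    then have "rank N (insert f C1) + rank N C2 = rank N (insert f C1 \<union> C2)"
      using first spans[OF first(2)] ra rb rab skr by simp
    moreover have "insert f C1 \<noteq> C2" using f1 by blast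
    ultimately show False using skew_in_N circuit_series_contract_lift_spanning[OF w c c1]
      circuit_series_contract_lift_nonspanning[OF w c c2] first by blast
  next
    case second
    have "C1 \<union> insert f C2 = insert f (C1 \<union> C2)" by blast
    then have "rank N C1 + rank N (insert f C2) = rank N (C1 \<union> insert f C2)"
      using second spans[OF second(1)] ra rb rab skr by simp
    moreover have "C1 \<noteq> insert f C2" using f1 by blast
    ultimately show False using skew_in_N circuit_series_contract_lift_nonspanning[OF w c c1]
      circuit_series_contract_lift_spanning[OF w c c2] second by blast
  qed
qed

lemma no_skew_circuits_restriction: assumes w: "wf_matroid N" and Z: "Z \<subseteq> gnd N" and ns: "\<not> has_skew_circuits N"
  shows "\<not> has_skew_circuits (restriction N Z)"
proof
  assume "has_skew_circuits (restriction N Z)"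
  then obtain C1 C2 where c1: "circuit (restriction N Z) C1" and c2: "circuit (restriction N Z) C2"
    and ne: "C1 \<noteq> C2" and sk: "skew (restriction N Z) C1 C2" unfolding has_skew_circuits_def by blast
  have wr: "wf_matroid (restriction N Z)" by (rule wf_restriction[OF w Z])
  have s1: "C1 \<subseteq> Z" using circuitD(1)[OF wr c1] by simp
  have s2: "C2 \<subseteq> Z" using circuitD(1)[OF wr c2] by simp
  have "circuit N C1" "circuit N C2" using circuit_restriction_iff[OF w Z s1] circuit_restriction_iff[OF w Z s2] c1 c2 by blast+
  moreover have "skew N C1 C2" using sk s1 s2 rank_restriction[of C1 Z N] rank_restriction[of C2 Z N] rank_restriction[of "C1 \<union> C2" Z N]
    unfolding skew_def by simp
  ultimately show False using ns ne unfolding has_skew_circuits_def by blast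
qed

lemma no_skew_circuits_series_minor:
  "series_minor N M \<Longrightarrow> wf_matroid M \<Longrightarrow> \<not> has_skew_circuits M \<Longrightarrow> wf_matroid N \<and> \<not> has_skew_circuits N"
proof (induction N M rule: series_minor.induct)
  case (refl M)
  then show ?case by blast
next
  case (del N M e)
  then have w: "wf_matroid N" and ns: "\<not> has_skew_circuits N" by blast+
  have sub: "gnd N - {e} \<subseteq> gnd N" by blast
  show ?case unfolding delete_eq_restriction[OF w]
    using wf_restriction[OF w sub] no_skew_circuits_restriction[OF w sub ns] by (rule conjI)
next
  case (scon N M f g)
  then have w: "wf_matroid N" and ns: "\<not> has_skew_circuits N" by blast+
  show ?case using wf_contract[OF w] no_skew_circuits_series_contract[OF w scon.hyps(2) ns] by (rule conjI)
qed

section \<open>The series connection SU\<close>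

lemma circuit_uniform: assumes "finite S"
  shows "circuit (uniform r S) C \<longleftrightarrow> C \<subseteq> S \<and> card C = Suc r"
proof
  assume c: "circuit (uniform r S) C"
  then have CS: "C \<subseteq> S" and nd: "\<not> card C \<le> r" and sub: "\<And>D. D \<subset> C \<Longrightarrow> card D \<le> r"
    unfolding circuit_def uniform_def by auto
  have fC: "finite C" using CS assms finite_subset by blast
  have "C \<noteq> {}" using nd by auto
  then obtain x where x: "x \<in> C" by blast
  have "C - {x} \<subset> C" using x by blast
  then have "card (C - {x}) \<le> r" by (rule sub)
  then have "card C \<le> Suc r" using x fC by simp
  then show "C \<subseteq> S \<and> card C = Suc r" using nd CS by simp
next
  assume h: "C \<subseteq> S \<and> card C = Suc r"
  have fC: "finite C" using h assms finite_subset by blast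
  show "circuit (uniform r S) C" unfolding circuit_def uniform_def matroid.sel
  proof (intro conjI allI impI)
    show "C \<subseteq> S" using h by blast
    show "C \<notin> {Y. Y \<subseteq> S \<and> card Y \<le> r}" using h by simp
    fix D assume D: "D \<subset> C"
    have "card D < card C" by (rule psubset_card_mono[OF fC D])
    then show "D \<in> {Y. Y \<subseteq> S \<and> card Y \<le> r}" using D h by auto
  qed
qed

lemma circuit_uniform_corank_one:
  assumes fin: "finite S" and r: "Suc (Suc r) = card S"
  shows "circuit (uniform r S) C \<longleftrightarrow> (\<exists>a\<in>S. C = S - {a})"
proof
  assume "circuit (uniform r S) C"
  then have C: "C \<subseteq> S" "Suc (card C) = card S" using circuit_uniform[OF fin] r by auto
  then have "card (S - C) = 1" using card_Diff_subset[OF finite_subset[OF C(1) fin] C(1)] by simp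
  then obtain a where "S - C = {a}" by (rule card_1_singletonE)
  then show "\<exists>a\<in>S. C = S - {a}" using C(1) by blast
next
  assume "\<exists>a\<in>S. C = S - {a}"
  then show "circuit (uniform r S) C" using circuit_uniform[OF fin] fin r by auto
qed

lemma gnd_uniform [simp]: "gnd (uniform r S) = S" unfolding uniform_def by simp

lemma singleton_deletions_avoiding:
  assumes "p \<in> S"
  shows "{C. (\<exists>a\<in>S. C = S - {a}) \<and> p \<notin> C} = {S - {p}}"
proof (intro equalityI subsetI)
  fix C assume "C \<in> {C. (\<exists>a\<in>S. C = S - {a}) \<and> p \<notin> C}"
  then obtain a where "C = S - {a}" "p \<notin> C" by blast
  then have "C = S - {p}" using assms by blast
  then show "C \<in> {S - {p}}" by simp
qed (use assms in blast)

lemma indep_series_connection_uniform_iff: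
  assumes fin: "finite S1" "finite S2" and card: "2 \<le> card S1" "2 \<le> card S2" and p: "S1 \<inter> S2 = {p}"
  shows "X \<in> indeps (series_connection (uniform (card S1 - 2) S1) (uniform (card S2 - 2) S2) p) \<longleftrightarrow>
    X \<subseteq> S1 \<union> S2 \<and> \<not> S1 - {p} \<subseteq> X \<and> \<not> S2 - {p} \<subseteq> X \<and>
    \<not> (\<exists>a\<in>S1 - {p}. \<exists>b\<in>S2 - {p}. S1 \<union> S2 - {a, b} \<subseteq> X)"
proof -
  have c1: "circuit (uniform (card S1 - 2) S1) C \<longleftrightarrow> (\<exists>a\<in>S1. C = S1 - {a})" for C
    using circuit_uniform_corank_one[OF fin(1)] card(1) by simp
  have c2: "circuit (uniform (card S2 - 2) S2) C \<longleftrightarrow> (\<exists>a\<in>S2. C = S2 - {a})" for C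
    using circuit_uniform_corank_one[OF fin(2)] card(2) by simp
  have pS: "p \<in> S1" "p \<in> S2" using p by auto
  have joined: "{C1 \<union> C2 |C1 C2. (\<exists>a\<in>S1. C1 = S1 - {a}) \<and> p \<in> C1 \<and> (\<exists>b\<in>S2. C2 = S2 - {b}) \<and> p \<in> C2}
    = {S1 \<union> S2 - {a, b} |a b. a \<in> S1 - {p} \<and> b \<in> S2 - {p}}"
  proof (intro equalityI subsetI)
    fix C assume "C \<in> {C1 \<union> C2 |C1 C2. (\<exists>a\<in>S1. C1 = S1 - {a}) \<and> p \<in> C1 \<and> (\<exists>b\<in>S2. C2 = S2 - {b}) \<and> p \<in> C2}"
    then obtain a b where ab: "a \<in> S1" "b \<in> S2" "p \<in> S1 - {a}" "p \<in> S2 - {b}" "C = (S1 - {a}) \<union> (S2 - {b})"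
      by blast
    then have a: "a \<in> S1 - {p}" and b: "b \<in> S2 - {p}" by blast+
    then have "a \<notin> S2" "b \<notin> S1" using p by blast+
    then have "C = S1 \<union> S2 - {a, b}" using ab(5) by blast
    then show "C \<in> {S1 \<union> S2 - {a, b} |a b. a \<in> S1 - {p} \<and> b \<in> S2 - {p}}" using a b by blast
  next
    fix C assume "C \<in> {S1 \<union> S2 - {a, b} |a b. a \<in> S1 - {p} \<and> b \<in> S2 - {p}}"
    then obtain a b where ab: "a \<in> S1 - {p}" "b \<in> S2 - {p}" "C = S1 \<union> S2 - {a, b}" by blast
    moreover have "a \<notin> S2" "b \<notin> S1" using ab p by blast+
    ultimately have "C = (S1 - {a}) \<union> (S2 - {b})" "p \<in> S1 - {a}" "p \<in> S2 - {b}" using pS by blast+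
    then show "C \<in> {C1 \<union> C2 |C1 C2. (\<exists>a\<in>S1. C1 = S1 - {a}) \<and> p \<in> C1 \<and> (\<exists>b\<in>S2. C2 = S2 - {b}) \<and> p \<in> C2}"
      using ab by blast
  qed
  show ?thesis
    unfolding series_connection_def Let_def matroid.sel gnd_uniform c1 c2
      singleton_deletions_avoiding[OF pS(1)] singleton_deletions_avoiding[OF pS(2)] joined
    by blast
qed

lemma gnd_SU: assumes "3 \<le> k" "3 \<le> l" shows "gnd (SU k l) = {0..<k + l - 1}"
  unfolding SU_def series_connection_def Let_def using assms by auto

lemma indep_SU_iff: assumes k: "3 \<le> k" and l: "3 \<le> l"
  shows "Y \<in> indeps (SU k l) \<longleftrightarrow> Y \<subseteq> {0..<k + l - 1} \<and> \<not> {0..<k - 1} \<subseteq> Y \<and> \<not> {k..<k + l - 1} \<subseteq> Y \<and>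
     \<not> (\<exists>a\<in>{0..<k - 1}. \<exists>b\<in>{k..<k + l - 1}. {0..<k + l - 1} - {a, b} \<subseteq> Y)"
proof -
  have "{0..<k} \<inter> {k - 1..<k - 1 + l} = {k - 1}" "card {0..<k} - 2 = k - 2" "card {k - 1..<k - 1 + l} - 2 = l - 2"
    "{0..<k} - {k - 1} = {0..<k - 1}" "{k - 1..<k - 1 + l} - {k - 1} = {k..<k + l - 1}"
    "{0..<k} \<union> {k - 1..<k - 1 + l} = {0..<k + l - 1}"
    using k l by auto
  then show ?thesis
    using indep_series_connection_uniform_iff[of "{0..<k}" "{k - 1..<k - 1 + l}" "k - 1" Y] k l
    unfolding SU_def by simp
qed

lemma has_skew_circuits_if_iso: assumes w: "wf_matroid N" and iso: "iso N S"
  and A: "A \<subseteq> gnd S" and B: "B \<subseteq> gnd S" and d: "A \<inter> B = {}" and a0: "a0 \<in> A" and b0: "b0 \<in> B"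
  and nA: "A \<notin> indeps S" and nB: "B \<notin> indeps S"
  and iA: "\<forall>a\<in>A. A - {a} \<in> indeps S" and iB: "\<forall>b\<in>B. B - {b} \<in> indeps S"
  and iAB: "\<forall>a\<in>A. \<forall>b\<in>B. (A - {a}) \<union> (B - {b}) \<in> indeps S"
  shows "has_skew_circuits N"
proof -
  obtain \<phi> where bij: "bij_betw \<phi> (gnd N) (gnd S)"
    and ind: "\<And>X. X \<subseteq> gnd N \<Longrightarrow> X \<in> indeps N \<longleftrightarrow> \<phi> ` X \<in> indeps S"
    using iso unfolding iso_def by blast
  have inj: "inj_on \<phi> (gnd N)" and img: "\<phi> ` gnd N = gnd S" using bij unfolding bij_betw_def by auto
  have pre: "\<phi> ` {x \<in> gnd N. \<phi> x \<in> T} = T" if T: "T \<subseteq> gnd S" for T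
  proof
    show "\<phi> ` {x \<in> gnd N. \<phi> x \<in> T} \<subseteq> T" by blast
    show "T \<subseteq> \<phi> ` {x \<in> gnd N. \<phi> x \<in> T}"
    proof
      fix t assume t: "t \<in> T"
      then have "t \<in> \<phi> ` gnd N" using T img by blast
      then obtain x where "x \<in> gnd N" "t = \<phi> x" by blast
      then show "t \<in> \<phi> ` {x \<in> gnd N. \<phi> x \<in> T}" using t by blast
    qed
  qed
  have rm: "\<phi> ` (Y - {x}) = \<phi> ` Y - {\<phi> x}" if "Y \<subseteq> gnd N" "x \<in> gnd N" for Y x
  proof -
    have "Y - {x} \<subseteq> gnd N" "{x} \<subseteq> gnd N" using that by blast+
    then show ?thesis using inj_on_image_set_diff[OF inj, of Y "{x}"] by simp
  qed
  define X1 where "X1 = {x \<in> gnd N. \<phi> x \<in> A}"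
  define X2 where "X2 = {x \<in> gnd N. \<phi> x \<in> B}"
  have X1: "X1 \<subseteq> gnd N" "\<phi> ` X1 = A" unfolding X1_def using pre[OF A] by auto
  have X2: "X2 \<subseteq> gnd N" "\<phi> ` X2 = B" unfolding X2_def using pre[OF B] by auto
  have circ: "circuit N X" if X: "X \<subseteq> gnd N" "\<phi> ` X = T" "T \<notin> indeps S" "\<forall>t\<in>T. T - {t} \<in> indeps S" for X T
  proof (rule circuitI[OF w X(1)])
    show "X \<notin> indeps N" using ind[OF X(1)] X by simp
    show "\<forall>x\<in>X. X - {x} \<in> indeps N"
    proof
      fix x assume x: "x \<in> X"
      have "\<phi> ` (X - {x}) = T - {\<phi> x}" using rm[of X x] X x by blast
      moreover have "\<phi> x \<in> T" using X x by blast
      ultimately have "\<phi> ` (X - {x}) \<in> indeps S" using X(4) by simp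
      moreover have "X - {x} \<subseteq> gnd N" using X by blast
      ultimately show "X - {x} \<in> indeps N" using ind by blast
    qed
  qed
  have c1: "circuit N X1" by (rule circ[OF X1 nA iA])
  have c2: "circuit N X2" by (rule circ[OF X2 nB iB])
  obtain x1 where x1: "x1 \<in> X1" "\<phi> x1 = a0" using X1(2) a0 by (metis imageE)
  obtain x2 where x2: "x2 \<in> X2" "\<phi> x2 = b0" using X2(2) b0 by (metis imageE)
  have dX: "X1 \<inter> X2 = {}" unfolding X1_def X2_def using d by blast
  have ne: "X1 \<noteq> X2" using x1 dX by blast
  define Y where "Y = (X1 - {x1}) \<union> (X2 - {x2})"
  have YE: "Y \<subseteq> gnd N" unfolding Y_def using X1 X2 by blast
  have "\<phi> ` Y = (\<phi> ` (X1 - {x1})) \<union> (\<phi> ` (X2 - {x2}))" unfolding Y_def by (rule image_Un)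
  also have "\<dots> = (A - {a0}) \<union> (B - {b0})" using rm[of X1 x1] rm[of X2 x2] X1 X2 x1 x2 by blast
  finally have "\<phi> ` Y \<in> indeps S" using iAB a0 b0 by simp
  then have iY: "Y \<in> indeps N" using ind[OF YE] by simp
  have f1: "finite X1" using circuitD(3)[OF w c1] .
  have f2: "finite X2" using circuitD(3)[OF w c2] .
  have "card Y = card (X1 - {x1}) + card (X2 - {x2})" unfolding Y_def
    by (rule card_Un_disjoint) (use f1 f2 dX in auto)
  then have cY: "card Y = (card X1 - 1) + (card X2 - 1)" using x1 x2 f1 f2 by simp
  have "Y \<subseteq> X1 \<union> X2" unfolding Y_def by blast
  then have "card Y \<le> rank N (X1 \<union> X2)" using card_le_rank[OF w _ iY] by blast
  moreover have "rank N X1 = card X1 - 1" "rank N X2 = card X2 - 1" using circuitD(6)[OF w c1] circuitD(6)[OF w c2] by auto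
  moreover have "rank N (X1 \<union> X2) \<le> rank N X1 + rank N X2" by (rule rank_Un_le[OF w])
  ultimately have "rank N X1 + rank N X2 = rank N (X1 \<union> X2)" using cY by linarith
  then show ?thesis unfolding has_skew_circuits_def skew_def using c1 c2 ne by blast
qed

lemma has_skew_circuits_if_iso_SU: assumes w: "wf_matroid N" and iso: "iso N (SU k l)" and k: "3 \<le> k" and l: "3 \<le> l"
  shows "has_skew_circuits N"
proof -
  let ?E = "{0..<k + l - 1}" and ?A = "{0..<k - 1}" and ?B = "{k..<k + l - 1}"
  have gE: "gnd (SU k l) = ?E" by (rule gnd_SU[OF k l])
  have good: "Y \<in> indeps (SU k l)" if Y: "Y \<subseteq> ?E" "k - 1 \<notin> Y" "\<not> ?A \<subseteq> Y" "\<not> ?B \<subseteq> Y" for Y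
  proof -
    have "\<not> (\<exists>a\<in>?A. \<exists>b\<in>?B. ?E - {a, b} \<subseteq> Y)"
    proof
      assume "\<exists>a\<in>?A. \<exists>b\<in>?B. ?E - {a, b} \<subseteq> Y"
      then obtain a b where a: "a \<in> ?A" and b: "b \<in> ?B" and s: "?E - {a, b} \<subseteq> Y" by blast
      have "k - 1 \<in> ?E - {a, b}" using a b k l by auto
      then show False using s Y(2) by blast
    qed
    then show ?thesis using indep_SU_iff[OF k l] Y by blast
  qed
  have AE: "?A \<subseteq> ?E" and BE: "?B \<subseteq> ?E" by auto
  have kA: "k - 1 \<notin> ?A" and kB: "k - 1 \<notin> ?B" using k by auto
  have kinB: "k \<in> ?B" using l by simp
  have zA: "0 \<in> ?A" using k by simp
  show ?thesis
  proof (rule has_skew_circuits_if_iso[OF w iso, of ?A ?B 0 k])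
    show "?A \<subseteq> gnd (SU k l)" "?B \<subseteq> gnd (SU k l)" using gE AE BE by auto
    show "?A \<inter> ?B = {}" by auto
    show "0 \<in> ?A" by (rule zA)
    show "k \<in> ?B" by (rule kinB)
    show "?A \<notin> indeps (SU k l)" using indep_SU_iff[OF k l] by blast
    show "?B \<notin> indeps (SU k l)" using indep_SU_iff[OF k l] by blast
    show "\<forall>a\<in>?A. ?A - {a} \<in> indeps (SU k l)"
    proof
      fix a assume a: "a \<in> ?A"
      show "?A - {a} \<in> indeps (SU k l)"
      proof (rule good)
        show "?A - {a} \<subseteq> ?E" using AE by blast
        show "k - 1 \<notin> ?A - {a}" using kA by blast
        show "\<not> ?A \<subseteq> ?A - {a}" using a by blast
        show "\<not> ?B \<subseteq> ?A - {a}" using kinB by auto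
      qed
    qed
    show "\<forall>b\<in>?B. ?B - {b} \<in> indeps (SU k l)"
    proof
      fix b assume b: "b \<in> ?B"
      show "?B - {b} \<in> indeps (SU k l)"
      proof (rule good)
        show "?B - {b} \<subseteq> ?E" using BE by blast
        show "k - 1 \<notin> ?B - {b}" using kB by blast
        have "0 \<notin> ?B - {b}" using k by simp
        then show "\<not> ?A \<subseteq> ?B - {b}" using zA by blast
        show "\<not> ?B \<subseteq> ?B - {b}" using b by blast
      qed
    qed
    show "\<forall>a\<in>?A. \<forall>b\<in>?B. (?A - {a}) \<union> (?B - {b}) \<in> indeps (SU k l)"
    proof (intro ballI)
      fix a b assume a: "a \<in> ?A" and b: "b \<in> ?B"
      show "(?A - {a}) \<union> (?B - {b}) \<in> indeps (SU k l)"
      proof (rule good)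
        show "(?A - {a}) \<union> (?B - {b}) \<subseteq> ?E" using AE BE by blast
        show "k - 1 \<notin> (?A - {a}) \<union> (?B - {b})" using kA kB by blast
        have "a \<notin> ?B" using a by auto
        then show "\<not> ?A \<subseteq> (?A - {a}) \<union> (?B - {b})" using a by blast
        have "b \<notin> ?A" using b by auto
        then show "\<not> ?B \<subseteq> (?A - {a}) \<union> (?B - {b})" using b by blast
      qed
    qed
  qed
qed

section \<open>Linked skew pairs\<close>

text \<open>The shape of M restricted to C1 \<union> C2 \<union> P, where C1, C2 are skew circuits and P is the part
  outside C1 \<union> C2 of a minimal circuit meeting both. The rank conditions say that N has nullity 3,
  that C1 and C2 are skew, and that C1 \<union> P and C2 \<union> P have nullity 1; the last one says that N has
  no coloops.\<close>

definition linked_skew_pair :: "'a matroid \<Rightarrow> 'a set \<Rightarrow> 'a set \<Rightarrow> 'a set \<Rightarrow> bool" where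
  "linked_skew_pair N C1 C2 P \<longleftrightarrow> wf_matroid N \<and> gnd N = C1 \<union> C2 \<union> P \<and> C1 \<inter> C2 = {} \<and> C1 \<inter> P = {} \<and> C2 \<inter> P = {}
    \<and> circuit N C1 \<and> circuit N C2 \<and> P \<noteq> {} \<and> rank N (gnd N) + 3 = card (gnd N)
    \<and> rank N (C1 \<union> C2) + 2 = card C1 + card C2
    \<and> rank N (C2 \<union> P) + card C1 = rank N (gnd N) + 2
    \<and> rank N (C1 \<union> P) + card C2 = rank N (gnd N) + 2
    \<and> (\<forall>x\<in>gnd N. rank N (gnd N - {x}) = rank N (gnd N))"

lemma linked_skew_pairD: assumes "linked_skew_pair N C1 C2 P"
  shows "wf_matroid N" "gnd N = C1 \<union> C2 \<union> P" "C1 \<inter> C2 = {}" "C1 \<inter> P = {}" "C2 \<inter> P = {}"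
    "circuit N C1" "circuit N C2" "P \<noteq> {}" "rank N (gnd N) + 3 = card (gnd N)"
    "rank N (C1 \<union> C2) + 2 = card C1 + card C2"
    "rank N (C2 \<union> P) + card C1 = rank N (gnd N) + 2"
    "rank N (C1 \<union> P) + card C2 = rank N (gnd N) + 2"
    "\<And>x. x \<in> gnd N \<Longrightarrow> rank N (gnd N - {x}) = rank N (gnd N)"
  using assms unfolding linked_skew_pair_def by blast+

lemma linked_skew_pair_sym: assumes "linked_skew_pair N C1 C2 P" shows "linked_skew_pair N C2 C1 P"
proof -
  note d = linked_skew_pairD[OF assms]
  have "C2 \<union> C1 \<union> P = C1 \<union> C2 \<union> P" "C2 \<union> C1 = C1 \<union> C2" "C2 \<inter> C1 = C1 \<inter> C2" by blast+
  then show ?thesis unfolding linked_skew_pair_def using d by (simp add: add.commute)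
qed

lemma linked_skew_pair_card: assumes "linked_skew_pair N C1 C2 P"
  shows "card (gnd N) = card C1 + card C2 + card P" "finite C1" "finite C2" "finite P"
proof -
  note d = linked_skew_pairD[OF assms]
  have fE: "finite (gnd N)" using wf_matroidD(1)[OF d(1)] .
  show f1: "finite C1" "finite C2" "finite P" using fE d(2) finite_subset by auto
  have "card (C1 \<union> C2) = card C1 + card C2" by (rule card_Un_disjoint[OF f1(1,2) d(3)])
  moreover have "card ((C1 \<union> C2) \<union> P) = card (C1 \<union> C2) + card P"
    by (rule card_Un_disjoint) (use f1 d(4,5) in auto)
  ultimately show "card (gnd N) = card C1 + card C2 + card P" using d(2) by simp
qed

lemma rank_series_contract_gnd: assumes w: "wf_matroid N" and c: "cocircuit N {f, g}"
  and nul: "rank N (gnd N) + 3 = card (gnd N)" and nc: "\<And>x. x \<in> gnd N \<Longrightarrow> rank N (gnd N - {x}) = rank N (gnd N)"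
  shows "rank (contract N {f}) (gnd (contract N {f})) + 1 = rank N (gnd N)"
    "rank (contract N {f}) (gnd (contract N {f})) + 3 = card (gnd (contract N {f}))"
    "\<And>x. x \<in> gnd (contract N {f}) \<Longrightarrow> rank (contract N {f}) (gnd (contract N {f}) - {x}) = rank (contract N {f}) (gnd (contract N {f}))"
proof -
  have fE: "f \<in> gnd N" using series_pairD(1)[OF w c] .
  have g: "gnd (contract N {f}) = gnd N - {f}" by simp
  have a: "rank (contract N {f}) (gnd N - {f}) + 1 = rank N (insert f (gnd N - {f}))" by (rule rank_series_contract[OF w c]) blast
  have i: "insert f (gnd N - {f}) = gnd N" using fE by blast
  show 1: "rank (contract N {f}) (gnd (contract N {f})) + 1 = rank N (gnd N)" using a i g by simp
  have fin: "finite (gnd N)" using wf_matroidD(1)[OF w] .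
  have pos: "card (gnd N) > 0" using fE fin card_gt_0_iff by blast
  have "card (gnd N - {f}) = card (gnd N) - 1" using fE fin by simp
  then have "card (gnd N - {f}) + 1 = card (gnd N)" using pos by linarith
  then show "rank (contract N {f}) (gnd (contract N {f})) + 3 = card (gnd (contract N {f}))" using 1 nul g by simp
  fix x assume x: "x \<in> gnd (contract N {f})"
  have b: "rank (contract N {f}) (gnd N - {f} - {x}) + 1 = rank N (insert f (gnd N - {f} - {x}))" by (rule rank_series_contract[OF w c]) blast
  have j: "insert f (gnd N - {f} - {x}) = gnd N - {x}" using fE x by auto
  have "rank N (gnd N - {x}) = rank N (gnd N)" using nc x by simp
  then show "rank (contract N {f}) (gnd (contract N {f}) - {x}) = rank (contract N {f}) (gnd (contract N {f}))"
    using b j 1 g by simp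
qed

lemma linked_skew_pair_contract_path: assumes I: "linked_skew_pair N C1 C2 P" and f: "f \<in> P" and g: "g \<in> P" and fg: "f \<noteq> g"
  shows "cocircuit N {f, g} \<and> linked_skew_pair (contract N {f}) C1 C2 (P - {f})"
proof -
  note d = linked_skew_pairD[OF I]
  note cd = linked_skew_pair_card[OF I]
  have w: "wf_matroid N" by (rule d(1))
  let ?E = "gnd N"
  have fE: "f \<in> ?E" "g \<in> ?E" using f g d(2) by auto
  have sub: "?E - {f, g} \<subseteq> (C1 \<union> C2) \<union> (P - {f, g})" using d(2) by blast
  have fP2: "finite (P - {f, g})" using cd(4) by simp
  have "rank N (?E - {f, g}) \<le> rank N ((C1 \<union> C2) \<union> (P - {f, g}))" by (rule rank_mono[OF w sub])
  also have "\<dots> \<le> rank N (C1 \<union> C2) + card (P - {f, g})" by (rule rank_Un_le_card[OF w fP2])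
  finally have r1: "rank N (?E - {f, g}) \<le> rank N (C1 \<union> C2) + card (P - {f, g})" .
  have fgP: "{f, g} \<subseteq> P" using f g by blast
  have "card {f, g} \<le> card P" by (rule card_mono[OF cd(4) fgP])
  moreover have "card {f, g} = 2" using fg by simp
  moreover have "card (P - {f, g}) = card P - card {f, g}" by (rule card_Diff_subset) (use fgP in auto)
  ultimately have "card (P - {f, g}) + 2 = card P" by linarith
  then have "rank N (?E - {f, g}) \<noteq> rank N ?E" using r1 d(9,10) cd(1) by linarith
  then have coc: "cocircuit N {f, g}"
    using series_pairI[OF w fE fg] d(13)[OF fE(1)] d(13)[OF fE(2)] by blast
  let ?N = "contract N {f}"
  have wc: "wf_matroid ?N" by (rule wf_contract[OF w])
  note sc = rank_series_contract_gnd[OF w coc d(9) d(13)]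
  have gnd': "gnd ?N = C1 \<union> C2 \<union> (P - {f})" using d(2) d(4,5) f by auto
  have c1: "circuit ?N C1" by (rule circuit_series_contract_avoiding[OF w coc d(6)]) (use f g d(4) in blast)+
  have c2: "circuit ?N C2" by (rule circuit_series_contract_avoiding[OF w coc d(7)]) (use f g d(5) in blast)+
  have ne: "P - {f} \<noteq> {}" using g fg by blast
  have r0: "rank ?N (C1 \<union> C2) + 1 = rank N (insert f (C1 \<union> C2))" by (rule rank_series_contract[OF w coc]) (use f d(4,5) d(2) in auto)
  have r0': "rank N (insert f (C1 \<union> C2)) = Suc (rank N (C1 \<union> C2))" by (rule rank_insert_series_element[OF w coc]) (use f g d(4,5) d(2) in auto)
  have ra: "rank ?N (C2 \<union> (P - {f})) + 1 = rank N (insert f (C2 \<union> (P - {f})))" by (rule rank_series_contract[OF w coc]) (use d(2,5) f in blast)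
  have ia: "insert f (C2 \<union> (P - {f})) = C2 \<union> P" using f by blast
  have rb: "rank ?N (C1 \<union> (P - {f})) + 1 = rank N (insert f (C1 \<union> (P - {f})))" by (rule rank_series_contract[OF w coc]) (use d(2,4) f in blast)
  have ib: "insert f (C1 \<union> (P - {f})) = C1 \<union> P" using f by blast
  have "linked_skew_pair ?N C1 C2 (P - {f})" unfolding linked_skew_pair_def
  proof (intro conjI)
    show "wf_matroid ?N" by (rule wc)
    show "gnd ?N = C1 \<union> C2 \<union> (P - {f})" by (rule gnd')
    show "C1 \<inter> C2 = {}" "C1 \<inter> (P - {f}) = {}" "C2 \<inter> (P - {f}) = {}" using d(3,4,5) by blast+
    show "circuit ?N C1" "circuit ?N C2" "P - {f} \<noteq> {}" by (rule c1, rule c2, rule ne)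
    show "rank ?N (gnd ?N) + 3 = card (gnd ?N)" by (rule sc(2))
    show "rank ?N (C1 \<union> C2) + 2 = card C1 + card C2" using r0 r0' d(10) by simp
    show "rank ?N (C2 \<union> (P - {f})) + card C1 = rank ?N (gnd ?N) + 2" using ra ia d(11) sc(1) by simp
    show "rank ?N (C1 \<union> (P - {f})) + card C2 = rank ?N (gnd ?N) + 2" using rb ib d(12) sc(1) by simp
    show "\<forall>x\<in>gnd ?N. rank ?N (gnd ?N - {x}) = rank ?N (gnd ?N)" using sc(3) by blast
  qed
  then show ?thesis using coc by blast
qed

lemma linked_skew_pair_contract_circuit: assumes I: "linked_skew_pair N C1 C2 P" and a: "a \<in> C1" and a': "a' \<in> C1" and aa: "a \<noteq> a'"
  and coc: "cocircuit N {a, a'}"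
  shows "linked_skew_pair (contract N {a}) (C1 - {a}) C2 P"
proof -
  note d = linked_skew_pairD[OF I]
  note cd = linked_skew_pair_card[OF I]
  have w: "wf_matroid N" by (rule d(1))
  let ?E = "gnd N"
  have c3: "card C1 \<ge> 3"
  proof (rule ccontr)
    assume "\<not> card C1 \<ge> 3"
    moreover have "card C1 \<ge> 2"
    proof -
      have "{a, a'} \<subseteq> C1" using a a' by blast
      then have "card {a, a'} \<le> card C1" using card_mono[OF cd(2)] by blast
      then show ?thesis using aa by simp
    qed
    ultimately have "card C1 = 2" by linarith
    moreover have "{a, a'} \<subseteq> C1" using a a' by blast
    moreover have "card {a, a'} = 2" using aa by simp
    ultimately have "C1 = {a, a'}" using card_subset_eq[OF cd(2)] by metis
    then have "?E - {a, a'} = C2 \<union> P" using d(2,3,4) by blast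
    moreover have "rank N (C2 \<union> P) = rank N ?E" using d(11) \<open>card C1 = 2\<close> by simp
    ultimately show False using series_pairD(3)[OF w coc] by simp
  qed
  let ?N = "contract N {a}"
  have wc: "wf_matroid ?N" by (rule wf_contract[OF w])
  note sc = rank_series_contract_gnd[OF w coc d(9) d(13)]
  have gnd': "gnd ?N = (C1 - {a}) \<union> C2 \<union> P" using d(2) d(3,4) a by auto
  have c1: "circuit ?N (C1 - {a})" by (rule circuit_series_contract_shrink[OF w coc d(6) a c3])
  have c2: "circuit ?N C2" by (rule circuit_series_contract_avoiding[OF w coc d(7)]) (use a a' d(3) in blast)+
  have r0: "rank ?N ((C1 - {a}) \<union> C2) + 1 = rank N (insert a ((C1 - {a}) \<union> C2))" by (rule rank_series_contract[OF w coc]) (use d(2,3) a in blast)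
  have i0: "insert a ((C1 - {a}) \<union> C2) = C1 \<union> C2" using a by blast
  have an: "a \<notin> C2" "a \<notin> P" "a' \<notin> C2" "a' \<notin> P" using a a' d(3,4) by blast+
  have s2: "C2 \<union> P \<subseteq> gnd N - {a}" using d(2) an by blast
  have ra: "rank ?N (C2 \<union> P) + 1 = rank N (insert a (C2 \<union> P))" by (rule rank_series_contract[OF w coc s2])
  have ra': "rank N (insert a (C2 \<union> P)) = Suc (rank N (C2 \<union> P))" by (rule rank_insert_series_element[OF w coc s2]) (use an in blast)
  have rb: "rank ?N ((C1 - {a}) \<union> P) + 1 = rank N (insert a ((C1 - {a}) \<union> P))" by (rule rank_series_contract[OF w coc]) (use d(2,4) a in blast)
  have ib: "insert a ((C1 - {a}) \<union> P) = C1 \<union> P" using a by blast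
  have cc: "card (C1 - {a}) + 1 = card C1" using c3 a cd(2) by simp
  show ?thesis unfolding linked_skew_pair_def
  proof (intro conjI)
    show "wf_matroid ?N" by (rule wc)
    show "gnd ?N = (C1 - {a}) \<union> C2 \<union> P" by (rule gnd')
    show "(C1 - {a}) \<inter> C2 = {}" "(C1 - {a}) \<inter> P = {}" "C2 \<inter> P = {}" using d(3,4,5) by blast+
    show "circuit ?N (C1 - {a})" "circuit ?N C2" "P \<noteq> {}" by (rule c1, rule c2, rule d(8))
    show "rank ?N (gnd ?N) + 3 = card (gnd ?N)" by (rule sc(2))
    show "rank ?N ((C1 - {a}) \<union> C2) + 2 = card (C1 - {a}) + card C2" using r0 i0 d(10) cc by simp
    show "rank ?N (C2 \<union> P) + card (C1 - {a}) = rank ?N (gnd ?N) + 2" using ra ra' d(11) sc(1) cc by simp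
    show "rank ?N ((C1 - {a}) \<union> P) + card C2 = rank ?N (gnd ?N) + 2" using rb ib d(12) sc(1) by simp
    show "\<forall>x\<in>gnd ?N. rank ?N (gnd ?N - {x}) = rank ?N (gnd ?N)" using sc(3) by blast
  qed
qed

lemma rank_Diff_pair_if_not_cocircuit: assumes I: "linked_skew_pair N C1 C2 P" and a: "a \<in> gnd N" "a' \<in> gnd N" "a \<noteq> a'"
  and nc: "\<not> cocircuit N {a, a'}"
  shows "rank N (gnd N - {a, a'}) = rank N (gnd N)"
  using series_pairI[OF linked_skew_pairD(1)[OF I] a] linked_skew_pairD(13)[OF I a(1)] linked_skew_pairD(13)[OF I a(2)] nc by blast

lemma card_Diff_three: assumes "finite E" "x \<in> E" "y \<in> E" "z \<in> E" "x \<noteq> y" "x \<noteq> z" "y \<noteq> z"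
  shows "card (E - {x, y, z}) + 3 = card E"
proof -
  have s: "{x, y, z} \<subseteq> E" using assms by blast
  have "card (E - {x, y, z}) = card E - card {x, y, z}" by (rule card_Diff_subset) (use s in auto)
  moreover have "card {x, y, z} = 3" using assms by simp
  moreover have "card {x, y, z} \<le> card E" by (rule card_mono[OF assms(1) s])
  ultimately show ?thesis by linarith
qed

lemma indep_linked_skew_pairD:
  assumes I: "linked_skew_pair N C1 C2 P" and Y: "Y \<subseteq> gnd N" and i: "Y \<in> indeps N"
  shows "\<not> C1 \<subseteq> Y \<and> \<not> C2 \<subseteq> Y \<and> \<not> (\<exists>a\<in>C1. \<exists>b\<in>C2. gnd N - {a, b} \<subseteq> Y)"
proof -
  note d = linked_skew_pairD[OF I]
  have w: "wf_matroid N" by (rule d(1))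
  let ?E = "gnd N"
  have fE: "finite ?E" using wf_matroidD(1)[OF w] .
  have n1: "\<not> C1 \<subseteq> Y"
  proof
    assume "C1 \<subseteq> Y"
    then have "C1 \<in> indeps N" by (rule wf_matroidD(4)[OF w i])
    then show False using circuitD(2)[OF w d(6)] by blast
  qed
  have n2: "\<not> C2 \<subseteq> Y"
  proof
    assume "C2 \<subseteq> Y"
    then have "C2 \<in> indeps N" by (rule wf_matroidD(4)[OF w i])
    then show False using circuitD(2)[OF w d(7)] by blast
  qed
  have n3: "\<not> (\<exists>a\<in>C1. \<exists>b\<in>C2. ?E - {a, b} \<subseteq> Y)"
  proof
    assume "\<exists>a\<in>C1. \<exists>b\<in>C2. ?E - {a, b} \<subseteq> Y"
    then obtain a b where a: "a \<in> C1" and b: "b \<in> C2" and s: "?E - {a, b} \<subseteq> Y" by blast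
    have ab: "a \<noteq> b" "a \<in> ?E" "b \<in> ?E" using a b d(2,3) by auto
    have "card (?E - {a, b}) = card ?E - card {a, b}" by (rule card_Diff_subset) (use ab in auto)
    moreover have "card {a, b} = 2" using ab by simp
    moreover have "card (?E - {a, b}) \<le> card Y" by (rule card_mono) (use Y fE finite_subset s in auto)
    moreover have "rank N Y = card Y" by (rule rank_indep_eq_card[OF w i])
    moreover have "rank N Y \<le> rank N ?E" by (rule rank_mono[OF w Y])
    ultimately show False using d(9) by linarith
  qed
  show ?thesis using n1 n2 n3 by blast
qed

lemma indep_linked_skew_pairI:
  assumes I: "linked_skew_pair N C1 C2 {p}"
    and ns1: "\<And>a a'. a \<in> C1 \<Longrightarrow> a' \<in> C1 \<Longrightarrow> a \<noteq> a' \<Longrightarrow> rank N (gnd N - {a, a'}) = rank N (gnd N)"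
    and ns2: "\<And>a a'. a \<in> C2 \<Longrightarrow> a' \<in> C2 \<Longrightarrow> a \<noteq> a' \<Longrightarrow> rank N (gnd N - {a, a'}) = rank N (gnd N)"
    and Y: "Y \<subseteq> gnd N"
    and h: "\<not> C1 \<subseteq> Y \<and> \<not> C2 \<subseteq> Y \<and> \<not> (\<exists>a\<in>C1. \<exists>b\<in>C2. gnd N - {a, b} \<subseteq> Y)"
  shows "Y \<in> indeps N"
proof -
  note d = linked_skew_pairD[OF I]
  note cd = linked_skew_pair_card[OF I]
  have w: "wf_matroid N" by (rule d(1))
  let ?E = "gnd N"
  have fE: "finite ?E" using wf_matroidD(1)[OF w] .
  obtain a b where a: "a \<in> C1" "a \<notin> Y" and b: "b \<in> C2" "b \<notin> Y" using h by blast
  have r1: "rank N C1 + 1 = card C1" using circuitD(6)[OF w d(6)] circuitD(3,4)[OF w d(6)]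
    by (simp add: card_gt_0_iff)
  have r2: "rank N C2 + 1 = card C2" using circuitD(6)[OF w d(7)] circuitD(3,4)[OF w d(7)]
    by (simp add: card_gt_0_iff)
  have sk: "skew N C1 C2" using r1 r2 d(10) unfolding skew_def by linarith
  show ?thesis
  proof (cases "p \<in> Y")
    case False
    have YC: "Y \<subseteq> C1 \<union> C2" using Y False d(2) by blast
    have iS: "Y \<inter> C1 \<in> indeps N" by (rule wf_matroidD(4)[OF w circuitD(5)[OF w d(6) a(1)]]) (use a in blast)
    have iT: "Y \<inter> C2 \<in> indeps N" by (rule wf_matroidD(4)[OF w circuitD(5)[OF w d(7) b(1)]]) (use b in blast)
    have "rank N (Y \<inter> C1) + rank N (Y \<inter> C2) = rank N ((Y \<inter> C1) \<union> (Y \<inter> C2))"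
      using skew_subsets[OF w d(3) sk, of "Y \<inter> C1" "Y \<inter> C2"] unfolding skew_def by blast
    moreover have "(Y \<inter> C1) \<union> (Y \<inter> C2) = Y" using YC by blast
    moreover have "card ((Y \<inter> C1) \<union> (Y \<inter> C2)) = card (Y \<inter> C1) + card (Y \<inter> C2)"
      by (rule card_Un_disjoint) (use cd(2,3) d(3) in auto)
    ultimately have "rank N Y = card Y" using rank_indep_eq_card[OF w iS] rank_indep_eq_card[OF w iT] by simp
    then show ?thesis using indep_iff_rank[OF w Y] by simp
  next
    case True
    obtain z where z: "z \<in> ?E" "z \<noteq> a" "z \<noteq> b" "z \<notin> Y" using h a b by blast
    have zp: "z \<noteq> p" using z True by blast
    have aE: "a \<in> ?E" "b \<in> ?E" using a b d(2) by auto
    have ab: "a \<noteq> b" using a b d(3) by blast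
    have zC: "z \<in> C1 \<or> z \<in> C2" using z zp d(2) by blast
    have indW: "W \<in> indeps N" if W: "W \<subseteq> ?E" "card W + 3 = card ?E" "rank N W = rank N ?E" for W
      using indep_iff_rank[OF w W(1)] W d(9) by simp
    show ?thesis
    proof (cases "z \<in> C1")
      case True
      define W where "W = ?E - {a, z, b}"
      have WE: "W \<subseteq> ?E" unfolding W_def by blast
      have cW: "card W + 3 = card ?E" unfolding W_def by (rule card_Diff_three[OF fE aE(1) z(1) aE(2)]) (use ab z in auto)
      have "rank N (insert b W) = rank N W" by (rule circuit_element_spanned[OF w d(7) b(1)]) (use a True d(3) in \<open>auto simp: W_def d(2)\<close>)
      moreover have "insert b W = ?E - {a, z}" unfolding W_def using aE z ab by auto
      moreover have "rank N (?E - {a, z}) = rank N ?E" using ns1[OF a(1) True] z by blast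
      ultimately have "rank N W = rank N ?E" by simp
      then have "W \<in> indeps N" using indW[OF WE cW] by blast
      moreover have "Y \<subseteq> W" unfolding W_def using Y a b z by blast
      ultimately show ?thesis using wf_matroidD(4)[OF w] by blast
    next
      case False
      then have zC2: "z \<in> C2" using zC by blast
      define W where "W = ?E - {a, b, z}"
      have WE: "W \<subseteq> ?E" unfolding W_def by blast
      have cW: "card W + 3 = card ?E" unfolding W_def by (rule card_Diff_three[OF fE aE(1) aE(2) z(1)]) (use ab z in auto)
      have "rank N (insert a W) = rank N W" by (rule circuit_element_spanned[OF w d(6) a(1)]) (use b zC2 d(3) in \<open>auto simp: W_def d(2)\<close>)
      moreover have "insert a W = ?E - {b, z}" unfolding W_def using aE z ab by auto
      moreover have "rank N (?E - {b, z}) = rank N ?E" using ns2[OF b(1) zC2] z by blast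
      ultimately have "rank N W = rank N ?E" by simp
      then have "W \<in> indeps N" using indW[OF WE cW] by blast
      moreover have "Y \<subseteq> W" unfolding W_def using Y a b z by blast
      ultimately show ?thesis using wf_matroidD(4)[OF w] by blast
    qed
  qed
qed

lemma indep_linked_skew_pair_iff:
  assumes I: "linked_skew_pair N C1 C2 {p}"
    and ns1: "\<And>a a'. a \<in> C1 \<Longrightarrow> a' \<in> C1 \<Longrightarrow> a \<noteq> a' \<Longrightarrow> rank N (gnd N - {a, a'}) = rank N (gnd N)"
    and ns2: "\<And>a a'. a \<in> C2 \<Longrightarrow> a' \<in> C2 \<Longrightarrow> a \<noteq> a' \<Longrightarrow> rank N (gnd N - {a, a'}) = rank N (gnd N)"
    and Y: "Y \<subseteq> gnd N"
  shows "Y \<in> indeps N \<longleftrightarrow> \<not> C1 \<subseteq> Y \<and> \<not> C2 \<subseteq> Y \<and> \<not> (\<exists>a\<in>C1. \<exists>b\<in>C2. gnd N - {a, b} \<subseteq> Y)"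
  using indep_linked_skew_pairD[OF I Y] indep_linked_skew_pairI[OF I ns1 ns2 Y] by blast

lemma inj_on_image_subset_iff: assumes "inj_on f C" "A \<subseteq> C" "B \<subseteq> C" shows "f ` A \<subseteq> f ` B \<longleftrightarrow> A \<subseteq> B"
proof
  assume h: "f ` A \<subseteq> f ` B"
  show "A \<subseteq> B"
  proof
    fix x assume x: "x \<in> A"
    then have "f x \<in> f ` B" using h by blast
    then show "x \<in> B" using inj_on_image_mem_iff[OF assms(1) _ assms(3)] x assms(2) by blast
  qed
qed blast

lemma iso_SU_if_bij_betw:
  assumes k: "3 \<le> k" and l: "3 \<le> l"
    and bij: "bij_betw \<phi> (gnd N) {0..<k + l - 1}"
    and C1: "C1 \<subseteq> gnd N" "\<phi> ` C1 = {0..<k - 1}" and C2: "C2 \<subseteq> gnd N" "\<phi> ` C2 = {k..<k + l - 1}"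
    and indep: "\<And>X. X \<subseteq> gnd N \<Longrightarrow>
      X \<in> indeps N \<longleftrightarrow> \<not> C1 \<subseteq> X \<and> \<not> C2 \<subseteq> X \<and> \<not> (\<exists>a\<in>C1. \<exists>b\<in>C2. gnd N - {a, b} \<subseteq> X)"
  shows "iso N (SU k l)"
proof -
  let ?E = "gnd N" and ?A = "{0..<k - 1}" and ?B = "{k..<k + l - 1}" and ?ES = "{0..<k + l - 1}"
  have inj: "inj_on \<phi> ?E" and imE: "\<phi> ` ?E = ?ES" using bij unfolding bij_betw_def by blast+
  have diff: "\<phi> ` (?E - {a, b}) = ?ES - {\<phi> a, \<phi> b}" if "a \<in> ?E" "b \<in> ?E" for a b
  proof -
    have "\<phi> ` (?E - {a, b}) = \<phi> ` ?E - \<phi> ` {a, b}" by (rule inj_on_image_set_diff[OF inj]) (use that in auto)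
    then show ?thesis using imE by simp
  qed
  have "X \<in> indeps N \<longleftrightarrow> \<phi> ` X \<in> indeps (SU k l)" if X: "X \<subseteq> ?E" for X
  proof -
    have XS: "\<phi> ` X \<subseteq> ?ES" using X imE by blast
    have eA: "?A \<subseteq> \<phi> ` X \<longleftrightarrow> C1 \<subseteq> X" using inj_on_image_subset_iff[OF inj C1(1) X] C1(2) by simp
    have eB: "?B \<subseteq> \<phi> ` X \<longleftrightarrow> C2 \<subseteq> X" using inj_on_image_subset_iff[OF inj C2(1) X] C2(2) by simp
    have eC: "(\<exists>a\<in>?A. \<exists>b\<in>?B. ?ES - {a, b} \<subseteq> \<phi> ` X) \<longleftrightarrow> (\<exists>a\<in>C1. \<exists>b\<in>C2. ?E - {a, b} \<subseteq> X)"
    proof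
      assume "\<exists>a\<in>?A. \<exists>b\<in>?B. ?ES - {a, b} \<subseteq> \<phi> ` X"
      then obtain a b where a: "a \<in> ?A" and b: "b \<in> ?B" and s: "?ES - {a, b} \<subseteq> \<phi> ` X" by blast
      obtain a' where a': "a' \<in> C1" "a = \<phi> a'" using a C1(2) by blast
      obtain b' where b': "b' \<in> C2" "b = \<phi> b'" using b C2(2) by blast
      have "\<phi> ` (?E - {a', b'}) \<subseteq> \<phi> ` X" using s diff[of a' b'] a' b' C1(1) C2(1) by auto
      then have "?E - {a', b'} \<subseteq> X" using inj_on_image_subset_iff[OF inj _ X] by blast
      then show "\<exists>a\<in>C1. \<exists>b\<in>C2. ?E - {a, b} \<subseteq> X" using a' b' by blast
    next
      assume "\<exists>a\<in>C1. \<exists>b\<in>C2. ?E - {a, b} \<subseteq> X"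
      then obtain a b where a: "a \<in> C1" and b: "b \<in> C2" and s: "?E - {a, b} \<subseteq> X" by blast
      have "\<phi> ` (?E - {a, b}) \<subseteq> \<phi> ` X" using s by blast
      then have "?ES - {\<phi> a, \<phi> b} \<subseteq> \<phi> ` X" using diff[of a b] a b C1(1) C2(1) by auto
      moreover have "\<phi> a \<in> ?A" "\<phi> b \<in> ?B" using a b C1(2) C2(2) by blast+
      ultimately show "\<exists>a\<in>?A. \<exists>b\<in>?B. ?ES - {a, b} \<subseteq> \<phi> ` X" by blast
    qed
    show ?thesis unfolding indep[OF X] indep_SU_iff[OF k l] eA eB eC using XS by blast
  qed
  then show ?thesis unfolding iso_def using bij gnd_SU[OF k l] by auto
qed

lemma iso_SU_if_linked_skew_pair: assumes I: "linked_skew_pair N C1 C2 {p}"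
  and ns1: "\<And>a a'. a \<in> C1 \<Longrightarrow> a' \<in> C1 \<Longrightarrow> a \<noteq> a' \<Longrightarrow> rank N (gnd N - {a, a'}) = rank N (gnd N)"
  and ns2: "\<And>a a'. a \<in> C2 \<Longrightarrow> a' \<in> C2 \<Longrightarrow> a \<noteq> a' \<Longrightarrow> rank N (gnd N - {a, a'}) = rank N (gnd N)"
  shows "3 \<le> card C1 + 1 \<and> 3 \<le> card C2 + 1 \<and> iso N (SU (card C1 + 1) (card C2 + 1))"
proof -
  note d = linked_skew_pairD[OF I]
  note cd = linked_skew_pair_card[OF I]
  have w: "wf_matroid N" by (rule d(1))
  define k where "k = card C1 + 1"
  define l where "l = card C2 + 1"
  have "rank N (C2 \<union> {p}) \<le> rank N (gnd N)" by (rule rank_mono[OF w]) (use d(2) in blast)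
  then have k3: "3 \<le> k" using d(11) unfolding k_def by linarith
  have "rank N (C1 \<union> {p}) \<le> rank N (gnd N)" by (rule rank_mono[OF w]) (use d(2) in blast)
  then have l3: "3 \<le> l" using d(12) unfolding l_def by linarith
  let ?A = "{0..<k - 1}" and ?B = "{k..<k + l - 1}"
  have cA: "card ?A = card C1" unfolding k_def by simp
  have cB: "card ?B = card C2" unfolding l_def by simp
  obtain g1 where g1: "bij_betw g1 C1 ?A" using finite_same_card_bij[OF cd(2) _ cA[symmetric]] by blast
  obtain g2 where g2: "bij_betw g2 C2 ?B" using finite_same_card_bij[OF cd(3) _ cB[symmetric]] by blast
  define \<phi> where "\<phi> x = (if x \<in> C1 then g1 x else if x \<in> C2 then g2 x else k - 1)" for x
  have p1: "p \<notin> C1" "p \<notin> C2" using d(4,5) by auto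
  have b1: "bij_betw \<phi> C1 ?A" using g1 bij_betw_cong[of C1 \<phi> g1 ?A] unfolding \<phi>_def by simp
  have eq2: "\<And>x. x \<in> C2 \<Longrightarrow> \<phi> x = g2 x" using d(3) unfolding \<phi>_def by auto
  have b2: "bij_betw \<phi> C2 ?B" using g2 bij_betw_cong[of C2 \<phi> g2 ?B, OF eq2] by simp
  have b3: "bij_betw \<phi> {p} {k - 1}" unfolding bij_betw_def \<phi>_def using p1 by simp
  have AB: "?A \<inter> ?B = {}" by auto
  have b12: "bij_betw \<phi> (C1 \<union> C2) (?A \<union> ?B)" by (rule bij_betw_combine[OF b1 b2 AB])
  have ABk: "(?A \<union> ?B) \<inter> {k - 1} = {}" using k3 by auto
  have b123: "bij_betw \<phi> (C1 \<union> C2 \<union> {p}) (?A \<union> ?B \<union> {k - 1})" by (rule bij_betw_combine[OF b12 b3 ABk])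
  have "?A \<union> ?B \<union> {k - 1} = {0..<k + l - 1}" using k3 l3 by auto
  then have bij: "bij_betw \<phi> (gnd N) {0..<k + l - 1}" using b123 d(2) by simp
  have "iso N (SU k l)"
  proof (rule iso_SU_if_bij_betw[OF k3 l3 bij])
    show "C1 \<subseteq> gnd N" "C2 \<subseteq> gnd N" using d(2) by auto
    show "\<phi> ` C1 = ?A" "\<phi> ` C2 = ?B" using b1 b2 unfolding bij_betw_def by blast+
    show "X \<in> indeps N \<longleftrightarrow> \<not> C1 \<subseteq> X \<and> \<not> C2 \<subseteq> X \<and> \<not> (\<exists>a\<in>C1. \<exists>b\<in>C2. gnd N - {a, b} \<subseteq> X)"
      if "X \<subseteq> gnd N" for X
      by (rule indep_linked_skew_pair_iff[OF I ns1 ns2 that])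
  qed
  then show ?thesis using k3 l3 unfolding k_def l_def by blast
qed

lemma linked_skew_pair_SU_series_minor: "linked_skew_pair N C1 C2 P \<Longrightarrow> \<exists>N' k l. 3 \<le> k \<and> 3 \<le> l \<and> series_minor N' N \<and> iso N' (SU k l)"
proof (induction "card (gnd N)" arbitrary: N C1 C2 P rule: less_induct)
  case less
  note I = less.prems
  note d = linked_skew_pairD[OF I]
  have w: "wf_matroid N" by (rule d(1))
  have fE: "finite (gnd N)" using wf_matroidD(1)[OF w] .
  have red: "\<exists>N' k l. 3 \<le> k \<and> 3 \<le> l \<and> series_minor N' N \<and> iso N' (SU k l)"
    if c: "cocircuit N {f, g}" and I2: "linked_skew_pair (contract N {f}) D1 D2 Q" for f g D1 D2 Q
  proof -
    have fE': "f \<in> gnd N" using series_pairD(1)[OF w c] .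
    have "card (gnd (contract N {f})) < card (gnd N)" using card_Diff1_less[OF fE fE'] by simp
    then obtain N' k l where N': "3 \<le> k" "3 \<le> l" "series_minor N' (contract N {f})" "iso N' (SU k l)"
      using less.hyps I2 by blast
    have "series_minor (contract N {f}) N" by (rule series_minor.scon[OF series_minor.refl c])
    then have "series_minor N' N" using series_minor_trans N'(3) by blast
    then show ?thesis using N' by blast
  qed
  show ?case
  proof (cases "\<exists>f g. f \<in> P \<and> g \<in> P \<and> f \<noteq> g")
    case True
    then obtain f g where fg: "f \<in> P" "g \<in> P" "f \<noteq> g" by blast
    have "cocircuit N {f, g} \<and> linked_skew_pair (contract N {f}) C1 C2 (P - {f})" by (rule linked_skew_pair_contract_path[OF I fg])
    then show ?thesis using red by blast
  next
    case nP: False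
    obtain p where P: "P = {p}" using d(8) nP by blast
    show ?thesis
    proof (cases "\<exists>a a'. a \<in> C1 \<and> a' \<in> C1 \<and> a \<noteq> a' \<and> cocircuit N {a, a'}")
      case True
      then obtain a a' where aa: "a \<in> C1" "a' \<in> C1" "a \<noteq> a'" "cocircuit N {a, a'}" by blast
      have "linked_skew_pair (contract N {a}) (C1 - {a}) C2 P" by (rule linked_skew_pair_contract_circuit[OF I aa])
      then show ?thesis using red[OF aa(4)] by blast
    next
      case n1: False
      show ?thesis
      proof (cases "\<exists>a a'. a \<in> C2 \<and> a' \<in> C2 \<and> a \<noteq> a' \<and> cocircuit N {a, a'}")
        case True
        then obtain a a' where aa: "a \<in> C2" "a' \<in> C2" "a \<noteq> a'" "cocircuit N {a, a'}" by blast
        have "linked_skew_pair (contract N {a}) (C2 - {a}) C1 P" by (rule linked_skew_pair_contract_circuit[OF linked_skew_pair_sym[OF I] aa])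
        then show ?thesis using red[OF aa(4)] by blast
      next
        case n2: False
        have I1: "linked_skew_pair N C1 C2 {p}" using I P by simp
        have ns1: "rank N (gnd N - {a, a'}) = rank N (gnd N)" if "a \<in> C1" "a' \<in> C1" "a \<noteq> a'" for a a'
          by (rule rank_Diff_pair_if_not_cocircuit[OF I]) (use that n1 d(2) in auto)
        have ns2: "rank N (gnd N - {a, a'}) = rank N (gnd N)" if "a \<in> C2" "a' \<in> C2" "a \<noteq> a'" for a a'
          by (rule rank_Diff_pair_if_not_cocircuit[OF I]) (use that n2 d(2) in auto)
        have "3 \<le> card C1 + 1 \<and> 3 \<le> card C2 + 1 \<and> iso N (SU (card C1 + 1) (card C2 + 1))"
          by (rule iso_SU_if_linked_skew_pair[OF I1 ns1 ns2])
        then show ?thesis using series_minor.refl by blast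
      qed
    qed
  qed
qed

section \<open>Skew circuits yield a linked skew pair\<close>

lemma circuit_meeting_if_rank_deficient: assumes w: "wf_matroid M" and A: "A \<subseteq> gnd M" and X: "X \<subseteq> gnd M" and d: "A \<inter> X = {}"
  and fX: "finite X" and r: "rank M (A \<union> X) < rank M A + card X"
  shows "\<exists>C. circuit M C \<and> C \<subseteq> A \<union> X \<and> C \<inter> X \<noteq> {}"
proof -
  obtain I where I: "I \<subseteq> A" "I \<in> indeps M" "card I = rank M A" using rank_witness[OF w] by blast
  have n: "I \<union> X \<notin> indeps M"
  proof
    assume i: "I \<union> X \<in> indeps M"
    have "card (I \<union> X) = card I + card X" by (rule card_Un_disjoint) (use finite_indep[OF w I(2)] fX I(1) d in auto)
    moreover have "card (I \<union> X) \<le> rank M (A \<union> X)" by (rule card_le_rank[OF w _ i]) (use I(1) in blast)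
    ultimately show False using r I(3) by linarith
  qed
  have "I \<union> X \<subseteq> gnd M" using I(1) A X by blast
  then obtain C where C: "C \<subseteq> I \<union> X" "circuit M C" using dependent_contains_circuit[OF w _ n] by blast
  have "C \<inter> X \<noteq> {}"
  proof
    assume "C \<inter> X = {}"
    then have "C \<subseteq> I" using C(1) by blast
    then have "C \<in> indeps M" by (rule wf_matroidD(4)[OF w I(2)])
    then show False using circuitD(2)[OF w C(2)] by blast
  qed
  then show ?thesis using C I(1) by blast
qed

lemma rank_deficient_if_circuit_meeting: assumes w: "wf_matroid M" and d: "A \<inter> X = {}" and fX: "finite X"
  and c: "circuit M C" and CS: "C \<subseteq> A \<union> X" and y: "y \<in> C" "y \<in> X"
  shows "rank M (A \<union> X) < rank M A + card X"
proof -
  have "rank M (insert y (A \<union> (X - {y}))) = rank M (A \<union> (X - {y}))"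
    by (rule circuit_element_spanned[OF w c y(1)]) (use CS in blast)
  moreover have "insert y (A \<union> (X - {y})) = A \<union> X" using y by blast
  moreover have "rank M (A \<union> (X - {y})) \<le> rank M A + card (X - {y})" by (rule rank_Un_le_card[OF w]) (use fX in simp)
  moreover have "card (X - {y}) + 1 = card X"
  proof -
    have "card (X - {y}) = card X - 1" using y fX by simp
    moreover have "card X > 0" using y fX card_gt_0_iff by blast
    ultimately show ?thesis by linarith
  qed
  ultimately have "rank M (A \<union> X) = rank M (A \<union> (X - {y}))" "rank M (A \<union> (X - {y})) \<le> rank M A + card (X - {y})"
    "card (X - {y}) + 1 = card X" by simp_all
  then show ?thesis by linarith
qed

lemma rank_Un_connecting_path: assumes w: "wf_matroid M" and c1: "circuit M C1" and c2: "circuit M C2" and disj: "C1 \<inter> C2 = {}"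
  and cD: "circuit M D" and D2: "D \<inter> C2 \<noteq> {}"
  and mn: "\<And>D'. circuit M D' \<Longrightarrow> D' \<inter> C1 \<noteq> {} \<Longrightarrow> D' \<inter> C2 \<noteq> {} \<Longrightarrow> card (D - (C1 \<union> C2)) \<le> card (D' - (C1 \<union> C2))"
  shows "rank M (C1 \<union> (D - (C1 \<union> C2))) = rank M C1 + card (D - (C1 \<union> C2))"
proof -
  define P where "P = D - (C1 \<union> C2)"
  have fP: "finite P" unfolding P_def using circuitD(3)[OF w cD] by simp
  have le: "rank M (C1 \<union> P) \<le> rank M C1 + card P" by (rule rank_Un_le_card[OF w fP])
  have "\<not> rank M (C1 \<union> P) < rank M C1 + card P"
  proof
    assume lt: "rank M (C1 \<union> P) < rank M C1 + card P"
    have C1E: "C1 \<subseteq> gnd M" using circuitD(1)[OF w c1] .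
    have PE: "P \<subseteq> gnd M" unfolding P_def using circuitD(1)[OF w cD] by blast
    have dj: "C1 \<inter> P = {}" unfolding P_def by blast
    obtain C'' where C'': "circuit M C''" "C'' \<subseteq> C1 \<union> P" "C'' \<inter> P \<noteq> {}" using circuit_meeting_if_rank_deficient[OF w C1E PE dj fP lt] by blast
    obtain dd where dd: "dd \<in> C''" "dd \<in> P" using C''(3) by blast
    obtain b1 where b1: "b1 \<in> D" "b1 \<in> C2" using D2 by blast
    have b1n: "b1 \<notin> C''" using C''(2) b1(2) disj unfolding P_def by blast
    have ddD: "dd \<in> D \<inter> C''" using dd unfolding P_def by blast
    obtain C3 where C3: "circuit M C3" "b1 \<in> C3" "C3 \<subseteq> (D \<union> C'') - {dd}"
      using strong_circuit_elimination[OF w cD C''(1) ddD, of b1] b1 b1n by blast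
    show False
    proof (cases "C3 \<inter> C1 = {}")
      case False
      have "card P \<le> card (C3 - (C1 \<union> C2))" using mn[OF C3(1) False] b1 C3(2) unfolding P_def by blast
      moreover have "C3 - (C1 \<union> C2) \<subseteq> P - {dd}" using C3(3) C''(2) unfolding P_def by blast
      then have "card (C3 - (C1 \<union> C2)) \<le> card (P - {dd})" using fP by (simp add: card_mono)
      moreover have "card (P - {dd}) < card P" by (rule card_Diff1_less[OF fP dd(2)])
      ultimately show False by linarith
    next
      case True
      have "C3 \<subseteq> D" using C3(3) C''(2) True unfolding P_def by blast
      then have "C3 = D" by (rule circuit_subset_eq[OF C3(1) cD])
      then show False using C3(3) ddD by blast
    qed
  qed
  then show ?thesis using le unfolding P_def by linarith
qed

lemma rank_Un_connecting_path_minus: assumes w: "wf_matroid M" and c1: "circuit M C1" and c2: "circuit M C2" and disj: "C1 \<inter> C2 = {}"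
  and cD: "circuit M D"
  and mn: "\<And>D'. circuit M D' \<Longrightarrow> D' \<inter> C1 \<noteq> {} \<Longrightarrow> D' \<inter> C2 \<noteq> {} \<Longrightarrow> card (D - (C1 \<union> C2)) \<le> card (D' - (C1 \<union> C2))"
  and h1: "rank M (C1 \<union> (D - (C1 \<union> C2))) = rank M C1 + card (D - (C1 \<union> C2))"
  and h2: "rank M (C2 \<union> (D - (C1 \<union> C2))) = rank M C2 + card (D - (C1 \<union> C2))"
  and x: "x \<in> D - (C1 \<union> C2)"
  shows "rank M ((C1 \<union> C2) \<union> ((D - (C1 \<union> C2)) - {x})) = rank M (C1 \<union> C2) + card ((D - (C1 \<union> C2)) - {x})"
proof -
  define P where "P = D - (C1 \<union> C2)"
  have fP: "finite P" unfolding P_def using circuitD(3)[OF w cD] by simp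
  have fPx: "finite (P - {x})" using fP by simp
  have le: "rank M ((C1 \<union> C2) \<union> (P - {x})) \<le> rank M (C1 \<union> C2) + card (P - {x})" by (rule rank_Un_le_card[OF w fPx])
  have "\<not> rank M ((C1 \<union> C2) \<union> (P - {x})) < rank M (C1 \<union> C2) + card (P - {x})"
  proof
    assume lt: "rank M ((C1 \<union> C2) \<union> (P - {x})) < rank M (C1 \<union> C2) + card (P - {x})"
    have CE: "C1 \<union> C2 \<subseteq> gnd M" using circuitD(1)[OF w c1] circuitD(1)[OF w c2] by blast
    have PE: "P - {x} \<subseteq> gnd M" unfolding P_def using circuitD(1)[OF w cD] by blast
    have dj: "(C1 \<union> C2) \<inter> (P - {x}) = {}" unfolding P_def by blast
    obtain C where C: "circuit M C" "C \<subseteq> (C1 \<union> C2) \<union> (P - {x})" "C \<inter> (P - {x}) \<noteq> {}"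
      using circuit_meeting_if_rank_deficient[OF w CE PE dj fPx lt] by blast
    obtain y where y: "y \<in> C" "y \<in> P" using C(3) by blast
    show False
    proof (cases "C \<inter> C1 \<noteq> {} \<and> C \<inter> C2 \<noteq> {}")
      case True
      have "card P \<le> card (C - (C1 \<union> C2))" using mn[OF C(1)] True unfolding P_def by blast
      moreover have "C - (C1 \<union> C2) \<subseteq> P - {x}" using C(2) by blast
      then have "card (C - (C1 \<union> C2)) \<le> card (P - {x})" using fPx by (simp add: card_mono)
      moreover have "card (P - {x}) < card P" by (rule card_Diff1_less[OF fP]) (use x in \<open>simp add: P_def\<close>)
      ultimately show False by linarith
    next
      case False
      show False
      proof (cases "C \<inter> C1 = {}")
        case n1: True
        have sb: "C \<subseteq> C2 \<union> P" using C(2) n1 by blast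
        have dj2: "C2 \<inter> P = {}" unfolding P_def by blast
        have "rank M (C2 \<union> P) < rank M C2 + card P" by (rule rank_deficient_if_circuit_meeting[OF w dj2 fP C(1) sb y])
        then show False using h2 unfolding P_def by simp
      next
        case n1': False
        then have n2: "C \<inter> C2 = {}" using False by blast
        have sb: "C \<subseteq> C1 \<union> P" using C(2) n2 by blast
        have dj1: "C1 \<inter> P = {}" unfolding P_def by blast
        have "rank M (C1 \<union> P) < rank M C1 + card P" by (rule rank_deficient_if_circuit_meeting[OF w dj1 fP C(1) sb y])
        then show False using h1 unfolding P_def by simp
      qed
    qed
  qed
  then show ?thesis using le unfolding P_def by linarith
qed

lemma connecting_path_of_skew_circuits:
  assumes w: "wf_matroid M" and conn: "connected_matroid M"
    and c1: "circuit M C1" and c2: "circuit M C2" and disj: "C1 \<inter> C2 = {}" and sk: "skew M C1 C2"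
  obtains P where "P \<subseteq> gnd M" "P \<noteq> {}" "finite P" "P \<inter> (C1 \<union> C2) = {}"
    "rank M (C1 \<union> P) = rank M C1 + card P" "rank M (C2 \<union> P) = rank M C2 + card P"
    "\<And>x. x \<in> P \<Longrightarrow> rank M ((C1 \<union> C2) \<union> (P - {x})) = rank M (C1 \<union> C2) + card (P - {x})"
    "\<And>x. x \<in> P \<Longrightarrow> rank M (C1 \<union> C2 \<union> P) = rank M ((C1 \<union> C2) \<union> (P - {x}))"
proof -
  have disj': "C2 \<inter> C1 = {}" using disj by blast
  obtain D where cD: "circuit M D" and D1: "D \<inter> C1 \<noteq> {}" and D2: "D \<inter> C2 \<noteq> {}"
    and mn: "\<And>D'. circuit M D' \<Longrightarrow> D' \<inter> C1 \<noteq> {} \<Longrightarrow> D' \<inter> C2 \<noteq> {} \<Longrightarrow> card (D - (C1 \<union> C2)) \<le> card (D' - (C1 \<union> C2))"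
    using minimal_connecting_circuit[OF w conn c1 c2 disj] by blast
  have u: "C2 \<union> C1 = C1 \<union> C2" by blast
  have mn': "\<And>D'. circuit M D' \<Longrightarrow> D' \<inter> C2 \<noteq> {} \<Longrightarrow> D' \<inter> C1 \<noteq> {} \<Longrightarrow> card (D - (C2 \<union> C1)) \<le> card (D' - (C2 \<union> C1))"
    using mn unfolding u by blast
  define P where "P = D - (C1 \<union> C2)"
  have h1: "rank M (C1 \<union> P) = rank M C1 + card P" unfolding P_def by (rule rank_Un_connecting_path[OF w c1 c2 disj cD D2 mn])
  have h2: "rank M (C2 \<union> P) = rank M C2 + card P" using rank_Un_connecting_path[OF w c2 c1 disj' cD D1 mn'] unfolding u P_def .
  have h3: "rank M ((C1 \<union> C2) \<union> (P - {x})) = rank M (C1 \<union> C2) + card (P - {x})" if x: "x \<in> P" for x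
    using rank_Un_connecting_path_minus[OF w c1 c2 disj cD mn h1[unfolded P_def] h2[unfolded P_def] x[unfolded P_def]] unfolding P_def .
  have Pne: "P \<noteq> {}"
  proof
    assume "P = {}"
    then have "D \<subseteq> C1 \<union> C2" unfolding P_def by blast
    then have "D \<subseteq> C1 \<or> D \<subseteq> C2" using circuit_inside_skew_side[OF w disj sk cD] by blast
    then show False using D1 D2 disj by blast
  qed
  have spanned: "rank M (C1 \<union> C2 \<union> P) = rank M ((C1 \<union> C2) \<union> (P - {x}))" if x: "x \<in> P" for x
  proof -
    have "rank M (insert x ((C1 \<union> C2) \<union> (P - {x}))) = rank M ((C1 \<union> C2) \<union> (P - {x}))"
      by (rule circuit_element_spanned[OF w cD]) (use x in \<open>auto simp: P_def\<close>)
    moreover have "insert x ((C1 \<union> C2) \<union> (P - {x})) = C1 \<union> C2 \<union> P" using x by blast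
    ultimately show ?thesis by simp
  qed
  have PE: "P \<subseteq> gnd M" and fP: "finite P" and Pdisj: "P \<inter> (C1 \<union> C2) = {}"
    unfolding P_def using circuitD(1,3)[OF w cD] by auto
  show ?thesis by (rule that[OF PE Pne fP Pdisj h1 h2 h3 spanned])
qed

lemma linked_skew_pair_restriction:
  assumes w: "wf_matroid M" and c1: "circuit M C1" and c2: "circuit M C2" and disj: "C1 \<inter> C2 = {}"
    and sk: "skew M C1 C2" and P: "P \<subseteq> gnd M" "P \<noteq> {}" "finite P" "P \<inter> (C1 \<union> C2) = {}"
    and h1: "rank M (C1 \<union> P) = rank M C1 + card P" and h2: "rank M (C2 \<union> P) = rank M C2 + card P"
    and h3: "\<And>x. x \<in> P \<Longrightarrow> rank M ((C1 \<union> C2) \<union> (P - {x})) = rank M (C1 \<union> C2) + card (P - {x})"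
    and spanned: "\<And>x. x \<in> P \<Longrightarrow> rank M (C1 \<union> C2 \<union> P) = rank M ((C1 \<union> C2) \<union> (P - {x}))"
  shows "linked_skew_pair (restriction M (C1 \<union> C2 \<union> P)) C1 C2 P"
proof -
  define Z where "Z = C1 \<union> C2 \<union> P"
  obtain p where p: "p \<in> P" using P(2) by blast
  have sk': "rank M C1 + rank M C2 = rank M (C1 \<union> C2)" using sk unfolding skew_def .
  have ZE: "Z \<subseteq> gnd M" unfolding Z_def using circuitD(1)[OF w c1] circuitD(1)[OF w c2] P(1) by blast
  have fC1: "finite C1" and fC2: "finite C2" using circuitD(3)[OF w c1] circuitD(3)[OF w c2] by auto
  have r1: "rank M C1 + 1 = card C1"
  proof -
    have "card C1 > 0" using fC1 circuitD(4)[OF w c1] card_gt_0_iff by blast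
    then show ?thesis using circuitD(6)[OF w c1] by linarith
  qed
  have r2: "rank M C2 + 1 = card C2"
  proof -
    have "card C2 > 0" using fC2 circuitD(4)[OF w c2] card_gt_0_iff by blast
    then show ?thesis using circuitD(6)[OF w c2] by linarith
  qed
  have cPx: "card (P - {x}) + 1 = card P" if "x \<in> P" for x
  proof -
    have "card (P - {x}) = card P - 1" using that P(3) by simp
    moreover have "card P > 0" using that P(3) card_gt_0_iff by blast
    ultimately show ?thesis by linarith
  qed
  have rZ: "rank M Z = rank M (C1 \<union> C2) + card (P - {p})" using spanned[OF p] h3[OF p] unfolding Z_def by simp
  have cZ: "card Z = card C1 + card C2 + card P"
  proof -
    have "card (C1 \<union> C2) = card C1 + card C2" by (rule card_Un_disjoint[OF fC1 fC2 disj])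
    moreover have "card ((C1 \<union> C2) \<union> P) = card (C1 \<union> C2) + card P"
      by (rule card_Un_disjoint) (use fC1 fC2 P(3,4) in auto)
    ultimately show ?thesis unfolding Z_def by simp
  qed
  let ?N = "restriction M Z"
  have rr: "rank ?N X = rank M X" if "X \<subseteq> Z" for X using rank_restriction[OF that] .
  show ?thesis unfolding linked_skew_pair_def Z_def[symmetric]
  proof (intro conjI)
    show "wf_matroid ?N" by (rule wf_restriction[OF w ZE])
    show "gnd ?N = Z" by simp
    show "C1 \<inter> C2 = {}" "C1 \<inter> P = {}" "C2 \<inter> P = {}" using disj P(4) by blast+
    show "circuit ?N C1" using circuit_restriction_iff[OF w ZE, of C1] c1 unfolding Z_def by blast
    show "circuit ?N C2" using circuit_restriction_iff[OF w ZE, of C2] c2 unfolding Z_def by blast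
    show "P \<noteq> {}" by (rule P(2))
    show "rank ?N (gnd ?N) + 3 = card (gnd ?N)" using rr[of Z] rZ cZ sk' r1 r2 cPx[OF p] by simp
    show "rank ?N (C1 \<union> C2) + 2 = card C1 + card C2" using rr[of "C1 \<union> C2"] sk' r1 r2 unfolding Z_def by simp
    have eZ: "rank ?N (gnd ?N) = rank M Z" using rr[of Z] by simp
    have s2: "C2 \<union> P \<subseteq> Z" and s1: "C1 \<union> P \<subseteq> Z" unfolding Z_def by blast+
    show "rank ?N (C2 \<union> P) + card C1 = rank ?N (gnd ?N) + 2"
      using rr[OF s2] eZ h2 rZ sk' r1 r2 cPx[OF p] by linarith
    show "rank ?N (C1 \<union> P) + card C2 = rank ?N (gnd ?N) + 2"
      using rr[OF s1] eZ h1 rZ sk' r1 r2 cPx[OF p] by linarith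
    show "\<forall>x\<in>gnd ?N. rank ?N (gnd ?N - {x}) = rank ?N (gnd ?N)"
    proof
      fix x assume "x \<in> gnd ?N"
      then have x: "x \<in> Z" by simp
      have "rank M (Z - {x}) = rank M Z"
      proof (cases "x \<in> P")
        case True
        have "(C1 \<union> C2) \<union> (P - {x}) = Z - {x}" using True P(4) unfolding Z_def by blast
        then show ?thesis using spanned[OF True] unfolding Z_def by simp
      next
        case False
        then have "x \<in> C1 \<or> x \<in> C2" using x unfolding Z_def by blast
        then have "rank M (insert x (Z - {x})) = rank M (Z - {x})"
        proof
          assume xc: "x \<in> C1"
          show ?thesis by (rule circuit_element_spanned[OF w c1 xc]) (unfold Z_def, blast)
        next
          assume xc: "x \<in> C2"
          show ?thesis by (rule circuit_element_spanned[OF w c2 xc]) (unfold Z_def, blast)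
        qed
        moreover have "insert x (Z - {x}) = Z" using x by blast
        ultimately show ?thesis by simp
      qed
      then show "rank ?N (gnd ?N - {x}) = rank ?N (gnd ?N)" using rr[of "Z - {x}"] rr[of Z] by simp
    qed
  qed
qed

lemma linked_skew_pair_if_skew_circuits:
  assumes w: "wf_matroid M" and conn: "connected_matroid M" and hs: "has_skew_circuits M"
  obtains Z C1 C2 P where "Z \<subseteq> gnd M" "linked_skew_pair (restriction M Z) C1 C2 P"
proof -
  obtain C1 C2 where c1: "circuit M C1" and c2: "circuit M C2" and ne: "C1 \<noteq> C2" and sk: "skew M C1 C2"
    using hs unfolding has_skew_circuits_def by blast
  have disj: "C1 \<inter> C2 = {}" by (rule skew_circuits_disjoint[OF w c1 c2 ne sk])
  obtain P where P: "P \<subseteq> gnd M" "P \<noteq> {}" "finite P" "P \<inter> (C1 \<union> C2) = {}"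
    and h: "rank M (C1 \<union> P) = rank M C1 + card P" "rank M (C2 \<union> P) = rank M C2 + card P"
      "\<And>x. x \<in> P \<Longrightarrow> rank M ((C1 \<union> C2) \<union> (P - {x})) = rank M (C1 \<union> C2) + card (P - {x})"
      "\<And>x. x \<in> P \<Longrightarrow> rank M (C1 \<union> C2 \<union> P) = rank M ((C1 \<union> C2) \<union> (P - {x}))"
    using connecting_path_of_skew_circuits[OF w conn c1 c2 disj sk] by blast
  have "C1 \<union> C2 \<union> P \<subseteq> gnd M" using circuitD(1)[OF w c1] circuitD(1)[OF w c2] P(1) by blast
  then show ?thesis by (rule that[OF _ linked_skew_pair_restriction[OF w c1 c2 disj sk P h]])
qed

lemma SU_series_minor_if_skew_circuits:
  assumes w: "wf_matroid M" and conn: "connected_matroid M" and hs: "has_skew_circuits M"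
  shows "\<exists>k l. 3 \<le> k \<and> 3 \<le> l \<and> (\<exists>N. series_minor N M \<and> iso N (SU k l))"
proof -
  obtain Z C1 C2 P where Z: "Z \<subseteq> gnd M" and linked: "linked_skew_pair (restriction M Z) C1 C2 P"
    by (rule linked_skew_pair_if_skew_circuits[OF w conn hs])
  obtain N k l where "3 \<le> k" "3 \<le> l" "series_minor N (restriction M Z)" "iso N (SU k l)"
    using linked_skew_pair_SU_series_minor[OF linked] by blast
  then show ?thesis using series_minor_trans[OF _ series_minor_restriction[OF w Z]] by blast
qed

lemma no_skew_circuits_iff_no_SU_series_minor:
  assumes w: "wf_matroid M" and conn: "connected_matroid M"
  shows "\<not> has_skew_circuits M \<longleftrightarrow>
    (\<forall>k l :: nat. 3 \<le> k \<longrightarrow> 3 \<le> l \<longrightarrow> \<not> (\<exists>N. series_minor N M \<and> iso N (SU k l)))"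
proof
  assume ns: "\<not> has_skew_circuits M"
  show "\<forall>k l :: nat. 3 \<le> k \<longrightarrow> 3 \<le> l \<longrightarrow> \<not> (\<exists>N. series_minor N M \<and> iso N (SU k l))"
  proof (intro allI impI notI)
    fix k l :: nat assume k: "3 \<le> k" and l: "3 \<le> l" and "\<exists>N. series_minor N M \<and> iso N (SU k l)"
    then obtain N where sm: "series_minor N M" and iso: "iso N (SU k l)" by blast
    have "wf_matroid N \<and> \<not> has_skew_circuits N" by (rule no_skew_circuits_series_minor[OF sm w ns])
    then show False using has_skew_circuits_if_iso_SU[OF _ iso k l] by blast
  qed
next
  assume "\<forall>k l :: nat. 3 \<le> k \<longrightarrow> 3 \<le> l \<longrightarrow> \<not> (\<exists>N. series_minor N M \<and> iso N (SU k l))"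
  then show "\<not> has_skew_circuits M" using SU_series_minor_if_skew_circuits[OF w conn] by blast
qed

theorem theorem1p1:
  fixes M :: "'a matroid"
  assumes "wf_matroid M" and "connected_matroid M"
  shows "(SSCE M \<longleftrightarrow> \<not> has_skew_circuits M)
       \<and> (\<not> has_skew_circuits M \<longleftrightarrow>
            (\<forall>k l :: nat. 3 \<le> k \<longrightarrow> 3 \<le> l \<longrightarrow> \<not> (\<exists>N. series_minor N M \<and> iso N (SU k l))))
       \<and> ((\<forall>k l :: nat. 3 \<le> k \<longrightarrow> 3 \<le> l \<longrightarrow> \<not> (\<exists>N. series_minor N M \<and> iso N (SU k l)))
            \<longleftrightarrow> unbreakable (dual M))"
  using SSCE_iff_no_skew_circuits[OF assms] no_skew_circuits_iff_no_SU_series_minor[OF assms]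
    no_skew_circuits_iff_unbreakable_dual[OF assms]
  by blast

end
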